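(* Assume that (A1), (A2), (A3) hold and that $\xi$ drifts to $-\infty$, and let $\beta_0\in(0,\beta)$ be such that $\Psi(\beta_0)<0$ ($\beta$ being the constant in (A3)). Fix $\varepsilon>0$. Then for every $n$ sufficiently large and every integer $1\le i\le\varepsilon^2n$, $$\mathbb P\big(X_i\text{ reaches }[\varepsilon n,\infty)\text{ before }\{1,\dots,K\}\big)\le2\varepsilon^{\beta_0},$$ where the event means $\inf\{k\ge0:X_i(k)\ge\varepsilon n\}<\inf\{k\ge0:X_i(k)\le K\}$.
   Context: Let $\mathbb N=\{1,2,\dots\}$. For every $n\ge1$ let $(p_{n,k})_{k\ge1}$ be nonnegative reals with $\sum_{k\ge1}p_{n,k}=1$, and let $(X_n(k))_{k\ge0}$ be the discrete-time Markov chain on $\mathbb N$ with $X_n(0)=n$ and $\mathbb P(X_n(k+1)=j\mid X_n(k)=i)=p_{i,j}$. Let $\Pi_n^*(dx)=\sum_{k\ge1}p_{n,k}\,\delta_{\ln k-\ln n}(dx)$. Let $(a_n)_{n\ge0}$ be positive reals, regularly varying with index $\gamma>0$. Let $\Pi$ be a measure on $\mathbb R\setminus\{0\}$ with $\Pi(\{-1,1\})=0$ and $\int(1\wedge x^2)\,\Pi(dx)<\infty$. (A1): for every continuous $f$ with compact support in $[0,\infty]\setminus\{1\}$, $a_n\,\mathbb E[f(X_n(1)/n)]\to\int_{\mathbb R}f(e^x)\,\Pi(dx)$. (A2): there exist $b\in\mathbb R$, $\sigma^2\ge0$ with $a_n\int_{-1}^1x\,\Pi_n^*(dx)\to b$ and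 $a_n\int_{-1}^1x^2\,\Pi_n^*(dx)\to\sigma^2+\int_{-1}^1x^2\,\Pi(dx)$. (A3): there exists $\beta>0$ with $\limsup_na_n\int_1^\infty e^{\beta x}\,\Pi_n^*(dx)<\infty$. $\Psi(\lambda)=\frac12\sigma^2\lambda^2+b\lambda+\int(e^{\lambda x}-1-\lambda x\mathbb 1_{|x|\le1})\,\Pi(dx)$ where finite; $\xi$ is the Lévy process with $\xi(0)=0$ and characteristic exponent $-\frac12\sigma^2\lambda^2+ib\lambda+\int(e^{i\lambda x}-1-i\lambda x\mathbb 1_{|x|\le1})\,\Pi(dx)$; it drifts to $-\infty$ if $\xi(t)\to-\infty$ a.s. $K\ge1$ is an integer such that for every $n\ge1$, with positive probability $X_n(i)\le K$ for some $i\ge0$. *)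

theory Defs
  imports "HOL-Probability.Probability"
begin

definition regularly_varying_seq :: "real \<Rightarrow> (nat \<Rightarrow> real) \<Rightarrow> bool" where
  "regularly_varying_seq \<gamma> a \<longleftrightarrow> (\<forall>n. a n > 0) \<and>
     (\<forall>l>0. ((\<lambda>n. a (nat \<lfloor>l * real n\<rfloor>) / a n) \<longlongrightarrow> l powr \<gamma>) sequentially)"

text \<open>Integral of g against Pi*_n = sum_k p(n,k) delta_(ln k - ln n); states k >= 1.\<close>
definition Pistar_int :: "(nat \<Rightarrow> nat \<Rightarrow> real) \<Rightarrow> nat \<Rightarrow> (real \<Rightarrow> real) \<Rightarrow> real" where
  "Pistar_int p n g = (\<Sum>k. p n (Suc k) * g (ln (real (Suc k)) - ln (real n)))"

definition Pistar_nn :: "(nat \<Rightarrow> nat \<Rightarrow> real) \<Rightarrow> nat \<Rightarrow> (real \<Rightarrow> real) \<Rightarrow> ennreal" where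
  "Pistar_nn p n g = (\<Sum>k. ennreal (p n (Suc k) * g (ln (real (Suc k)) - ln (real n))))"

text \<open>The Laplace exponent Psi (meaningful where the integral is finite).\<close>
definition Psi :: "real \<Rightarrow> real \<Rightarrow> real measure \<Rightarrow> real \<Rightarrow> real" where
  "Psi \<sigma>2 b Lm l = \<sigma>2 * l\<^sup>2 / 2 + b * l +
     (\<integral>x. exp (l * x) - 1 - l * x * indicator {-1..1} x \<partial>Lm)"

definition levy_exponent :: "real \<Rightarrow> real \<Rightarrow> real measure \<Rightarrow> real \<Rightarrow> complex" where
  "levy_exponent \<sigma>2 b Lm u = complex_of_real (- \<sigma>2 * u\<^sup>2 / 2) + \<i> * complex_of_real (b * u) +
     (CLINT x|Lm. iexp (u * x) - 1 - \<i> * complex_of_real (u * x * indicator {-1..1} x))"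

definition levy_process :: "'b measure \<Rightarrow> (real \<Rightarrow> 'b \<Rightarrow> real) \<Rightarrow> (real \<Rightarrow> complex) \<Rightarrow> bool" where
  "levy_process N \<xi> \<phi> \<longleftrightarrow> prob_space N \<and>
     (\<forall>t. \<xi> t \<in> borel_measurable N) \<and>
     (\<forall>\<omega>\<in>space N. \<xi> 0 \<omega> = 0) \<and>
     (\<forall>\<omega>\<in>space N. \<forall>t\<ge>0. continuous (at_right t) (\<lambda>s. \<xi> s \<omega>) \<and>
         (t > 0 \<longrightarrow> (\<exists>L. ((\<lambda>s. \<xi> s \<omega>) \<longlongrightarrow> L) (at_left t)))) \<and>
     (\<forall>(t :: nat \<Rightarrow> real) m. 0 \<le> t 0 \<and> strict_mono t \<longrightarrow>
         prob_space.indep_vars N (\<lambda>_. borel) (\<lambda>j \<omega>. \<xi> (t (Suc j)) \<omega> - \<xi> (t j) \<omega>) {..<m}) \<and>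
     (\<forall>s\<ge>0. \<forall>t\<ge>0. distr N borel (\<lambda>\<omega>. \<xi> (s + t) \<omega> - \<xi> s \<omega>) = distr N borel (\<xi> t)) \<and>
     (\<forall>t\<ge>0. \<forall>u. char (distr N borel (\<xi> t)) u = exp (complex_of_real t * \<phi> u))"

definition drifts_to_neg_infty :: "'b measure \<Rightarrow> (real \<Rightarrow> 'b \<Rightarrow> real) \<Rightarrow> bool" where
  "drifts_to_neg_infty N \<xi> \<longleftrightarrow> (AE \<omega> in N. filterlim (\<lambda>t. \<xi> t \<omega>) at_bot at_top)"

definition hit_time :: "(nat \<Rightarrow> 'c) \<Rightarrow> 'c set \<Rightarrow> enat" where
  "hit_time f A = (if \<exists>k. f k \<in> A then enat (LEAST k. f k \<in> A) else \<infinity>)"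

end

theory Submission
  imports Defs
begin

text \<open>The function \<open>l \<mapsto> l ^ \<beta>\<^sub>0\<close> is superharmonic for the chain at all large states: the
  one-step increment of its logarithm has law \<open>\<Pi>\<^sup>*\<^sub>j\<close>, and bounding \<open>e ^ (\<beta>\<^sub>0 y) - 1\<close> by a
  combination of truncated moments, two test functions and the tail \<open>e ^ (\<beta> y) 1(1,\<infinity>)(y)\<close>,
  hypotheses (A1)-(A3) show that \<open>a j (E (X\<^sub>j(1) / j) ^ \<beta>\<^sub>0 - 1)\<close> is eventually close to
  \<open>\<Psi>(\<beta>\<^sub>0) < 0\<close>. Hence \<open>min 1 ((l / L) ^ \<beta>\<^sub>0)\<close> dominates the probability of reaching
  \<open>[L, \<infinity>)\<close> before \<open>{1..K}\<close>, up to the contribution of the finitely many small states; since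
  \<open>{1..K}\<close> is reachable from each of them, that contribution tends to \<open>0\<close> as \<open>L \<rightarrow> \<infinity>\<close>. Taking
  \<open>L = \<epsilon> n\<close> and \<open>i \<le> \<epsilon>\<^sup>2 n\<close> gives the bound \<open>\<epsilon> ^ \<beta>\<^sub>0 + \<epsilon> ^ \<beta>\<^sub>0\<close>.\<close>

section \<open>Markov chains on the positive integers\<close>

locale stochastic_kernel =
  fixes p :: "nat \<Rightarrow> nat \<Rightarrow> real"
  assumes nonneg: "p n k \<ge> 0"
    and row_sums: "n \<ge> 1 \<Longrightarrow> (\<lambda>k. p n (Suc k)) sums 1"

text \<open>Rows with index \<open>0\<close>, and mass that \<open>p\<close> puts on state \<open>0\<close>, are junk: the chain lives on
  \<open>{1, 2, \<dots>}\<close> and only rows \<open>j \<ge> 1\<close> are ever used.\<close>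

definition transition_pmf :: "(nat \<Rightarrow> nat \<Rightarrow> real) \<Rightarrow> nat \<Rightarrow> nat pmf" where
  "transition_pmf p j = embed_pmf (\<lambda>l. if l = 0 then 0 else p j l)"

fun path_pmf :: "(nat \<Rightarrow> nat \<Rightarrow> real) \<Rightarrow> nat \<Rightarrow> nat \<Rightarrow> nat list pmf" where
  "path_pmf p 0 j = return_pmf [j]"
| "path_pmf p (Suc k) j = transition_pmf p j \<bind> (\<lambda>l. map_pmf ((#) j) (path_pmf p k l))"

lemma expectation_pmf_cong:
  fixes f g :: "'a \<Rightarrow> real"
  shows "(\<And>x. x \<in> set_pmf N \<Longrightarrow> f x = g x) \<Longrightarrow>
    measure_pmf.expectation N f = measure_pmf.expectation N g"
  by (rule integral_cong_AE) (auto simp: AE_measure_pmf_iff)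

lemma prob_bind_pmf:
  "measure_pmf.prob (N \<bind> f) S = measure_pmf.expectation N (\<lambda>x. measure_pmf.prob (f x) S)"
proof -
  have int: "integrable (measure_pmf N) (\<lambda>x. measure_pmf.prob (f x) S)"
    by (rule measure_pmf.integrable_const_bound[where B=1]) auto
  have "ennreal (measure_pmf.prob (N \<bind> f) S) = (\<integral>\<^sup>+ x. emeasure (measure_pmf (f x)) S \<partial>measure_pmf N)"
    by (simp add: measure_pmf.emeasure_eq_measure[symmetric] emeasure_bind_pmf)
  also have "\<dots> = ennreal (measure_pmf.expectation N (\<lambda>x. measure_pmf.prob (f x) S))"
    using int by (simp add: measure_pmf.emeasure_eq_measure nn_integral_eq_integral)
  finally show ?thesis by (simp add: ennreal_inj integral_nonneg)
qed

lemma integrable_pmf_bounded: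
  fixes f :: "'a \<Rightarrow> real"
  shows "(\<And>x. \<bar>f x\<bar> \<le> B) \<Longrightarrow> integrable (measure_pmf N) f"
  by (rule measure_pmf.integrable_const_bound[where B=B]) auto

context stochastic_kernel
begin

lemma pmf_transition_pmf:
  assumes "j \<ge> 1"
  shows "pmf (transition_pmf p j) l = (if l = 0 then 0 else p j l)"
proof -
  let ?f = "\<lambda>l. if l = 0 then 0 else p j l"
  have sums: "?f sums 1" using row_sums[OF assms] sums_Suc_iff[of ?f 1] by simp
  have "(\<integral>\<^sup>+ x. ennreal (?f x) \<partial>count_space UNIV) = ennreal (\<Sum>x. ?f x)"
    using sums nonneg
    by (simp add: nn_integral_count_space_nat suminf_ennreal2 sums_summable)
  also have "\<dots> = 1" using sums sums_unique by (metis ennreal_1)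
  finally show ?thesis unfolding transition_pmf_def using nonneg by (subst pmf_embed_pmf) auto
qed

lemma set_transition_pmf_pos: "j \<ge> 1 \<Longrightarrow> l \<in> set_pmf (transition_pmf p j) \<Longrightarrow> l \<ge> 1"
  using pmf_transition_pmf[of j l] by (cases l) (auto simp: set_pmf_eq)

lemma expectation_transition_pmf:
  assumes "j \<ge> 1" and summable: "summable (\<lambda>k. \<bar>p j (Suc k) * g (Suc k)\<bar>)"
  shows "measure_pmf.expectation (transition_pmf p j) g = (\<Sum>k. p j (Suc k) * g (Suc k))"
proof -
  let ?F = "\<lambda>x. pmf (transition_pmf p j) x * g x"
  have F: "?F x = (if x = 0 then 0 else p j x * g x)" for x
    using pmf_transition_pmf[OF assms(1)] by simp
  have sF: "summable (\<lambda>n. norm (?F n))"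
    using summable summable_Suc_iff[of "\<lambda>n. norm (?F n)"] by (simp add: F)
  have "measure_pmf.expectation (transition_pmf p j) g = (\<Sum>n. ?F n)"
    using sF by (simp add: pmf_expectation_eq_infsetsum abs_summable_on_nat_iff' infsetsum_nat')
  also have "\<dots> = (\<Sum>k. ?F (Suc k))"
    using suminf_split_head[OF summable_norm_cancel[OF sF]] F[of 0] by simp
  finally show ?thesis by (simp add: F)
qed

lemma set_path_pmf:
  "j \<ge> 1 \<Longrightarrow> ys \<in> set_pmf (path_pmf p k j) \<Longrightarrow>
     length ys = Suc k \<and> ys ! 0 = j \<and> (\<forall>y\<in>set ys. y \<ge> 1)"
proof (induction k arbitrary: j ys)
  case (Suc k)
  then obtain l ys' where l: "l \<in> set_pmf (transition_pmf p j)"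
    and ys': "ys' \<in> set_pmf (path_pmf p k l)" and ys: "ys = j # ys'" by auto
  have "l \<ge> 1" using set_transition_pmf_pos Suc.prems l by blast
  then show ?case using Suc.IH[OF _ ys'] ys Suc.prems by auto
qed auto

lemma pmf_path_pmf_Cons:
  assumes "j \<ge> 1"
  shows "pmf (path_pmf p (Suc k) j) (y # ys) =
     (if y = j then pmf (transition_pmf p j) (ys ! 0) * pmf (path_pmf p k (ys ! 0)) ys else 0)"
proof -
  have step: "pmf (map_pmf ((#) j) (path_pmf p k l)) (y # ys) =
      (if y = j then indicator {ys ! 0} l * pmf (path_pmf p k (ys ! 0)) ys else 0)"
    if l: "l \<in> set_pmf (transition_pmf p j)" for l
  proof (cases "y = j \<and> l = ys ! 0")
    case False
    have "l \<ge> 1" using set_transition_pmf_pos[OF assms l] .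
    then have "y # ys \<notin> set_pmf (map_pmf ((#) j) (path_pmf p k l))"
      using False set_path_pmf by fastforce
    then show ?thesis using False by (auto simp: set_pmf_eq)
  qed (simp add: pmf_map_inj')
  have "pmf (path_pmf p (Suc k) j) (y # ys) = measure_pmf.expectation (transition_pmf p j)
      (\<lambda>l. if y = j then indicator {ys ! 0} l * pmf (path_pmf p k (ys ! 0)) ys else 0)"
    by (simp add: pmf_bind step cong: expectation_pmf_cong)
  then show ?thesis by (auto simp: measure_pmf_single)
qed

lemma pmf_path_pmf:
  "j \<ge> 1 \<Longrightarrow> length ys = Suc k \<Longrightarrow> (\<forall>y\<in>set ys. y \<ge> 1) \<Longrightarrow>
     pmf (path_pmf p k j) ys = (if ys ! 0 = j then 1 else 0) * (\<Prod>m<k. p (ys ! m) (ys ! Suc m))"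
proof (induction k arbitrary: j ys)
  case 0
  then obtain y where "ys = [y]" by (cases ys) auto
  then show ?case by (auto simp: pmf_return)
next
  case (Suc k)
  then obtain y ys' where ys: "ys = y # ys'" by (cases ys) auto
  have ys': "length ys' = Suc k" "\<forall>y\<in>set ys'. y \<ge> 1" using Suc.prems ys by auto
  then have y1: "ys' ! 0 \<ge> 1" by (metis nth_mem zero_less_Suc)
  have "pmf (path_pmf p (Suc k) j) ys =
      (if y = j then pmf (transition_pmf p j) (ys' ! 0) * pmf (path_pmf p k (ys' ! 0)) ys' else 0)"
    unfolding ys by (rule pmf_path_pmf_Cons[OF Suc.prems(1)])
  also have "\<dots> = (if y = j then p j (ys' ! 0) * (\<Prod>m<k. p (ys' ! m) (ys' ! Suc m)) else 0)"
    using Suc.IH[OF y1 ys'] y1 pmf_transition_pmf[OF Suc.prems(1)] by auto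
  finally show ?case
    unfolding ys by (simp del: prod.lessThan_Suc add: prod.lessThan_Suc_shift)
qed

end

section \<open>Probability of hitting one set before another\<close>

definition hits_before :: "nat set \<Rightarrow> nat set \<Rightarrow> nat list \<Rightarrow> bool" where
  "hits_before A B ys \<longleftrightarrow> (\<exists>t<length ys. ys ! t \<in> A \<and> (\<forall>s<t. ys ! s \<notin> B))"

lemma hits_before_Nil [simp]: "\<not> hits_before A B []"
  by (simp add: hits_before_def)

lemma hits_before_Cons: "hits_before A B (y # ys) \<longleftrightarrow> y \<in> A \<or> (y \<notin> B \<and> hits_before A B ys)"
  unfolding hits_before_def
proof safe
  fix t assume t: "t < length (y # ys)" "(y # ys) ! t \<in> A" "\<forall>s<t. (y # ys) ! s \<notin> B" "y \<notin> A"
  then obtain t' where t': "t = Suc t'" by (cases t) auto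
  show "\<exists>t<length ys. ys ! t \<in> A \<and> (\<forall>s<t. ys ! s \<notin> B)"
    using t t' by (intro exI[of _ t']) auto
  show "y \<in> B \<Longrightarrow> False" using t t' by (metis nth_Cons_0 zero_less_Suc)
next
  show "y \<in> A \<Longrightarrow> \<exists>t<length (y # ys). (y # ys) ! t \<in> A \<and> (\<forall>s<t. (y # ys) ! s \<notin> B)"
    by (intro exI[of _ 0]) auto
next
  fix t assume "y \<notin> B" "t < length ys" "ys ! t \<in> A" "\<forall>s<t. ys ! s \<notin> B"
  then show "\<exists>t<length (y # ys). (y # ys) ! t \<in> A \<and> (\<forall>s<t. (y # ys) ! s \<notin> B)"
    by (intro exI[of _ "Suc t"]) (auto simp: less_Suc_eq_0_disj)
qed

lemma hits_before_map_upt: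
  "hits_before A B (map f [0..<Suc k]) \<longleftrightarrow> (\<exists>t<Suc k. f t \<in> A \<and> (\<forall>s<t. f s \<notin> B))"
  unfolding hits_before_def by (auto simp del: upt_Suc)

fun hit_prob_within :: "(nat \<Rightarrow> nat \<Rightarrow> real) \<Rightarrow> nat set \<Rightarrow> nat set \<Rightarrow> nat \<Rightarrow> nat \<Rightarrow> real" where
  "hit_prob_within p A B 0 j = (if j \<in> A then 1 else 0)"
| "hit_prob_within p A B (Suc k) j = (if j \<in> A then 1 else if j \<in> B then 0
     else measure_pmf.expectation (transition_pmf p j) (hit_prob_within p A B k))"

definition hit_prob :: "(nat \<Rightarrow> nat \<Rightarrow> real) \<Rightarrow> nat set \<Rightarrow> nat set \<Rightarrow> nat \<Rightarrow> real" where
  "hit_prob p A B j = (SUP k. hit_prob_within p A B k j)"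

lemma hit_prob_within_bounds: "0 \<le> hit_prob_within p A B k j \<and> hit_prob_within p A B k j \<le> 1"
proof (induction k arbitrary: j)
  case (Suc k)
  have "integrable (measure_pmf (transition_pmf p j)) (hit_prob_within p A B k)"
    by (rule integrable_pmf_bounded[of _ 1]) (use Suc.IH in auto)
  then have "measure_pmf.expectation (transition_pmf p j) (hit_prob_within p A B k)
      \<le> measure_pmf.expectation (transition_pmf p j) (\<lambda>_. 1)"
    using Suc.IH by (intro integral_mono) auto
  moreover have "0 \<le> measure_pmf.expectation (transition_pmf p j) (hit_prob_within p A B k)"
    using Suc.IH by (intro Bochner_Integration.integral_nonneg) auto
  ultimately show ?case by simp
qed simp

lemma integrable_hit_prob_within: "integrable (measure_pmf N) (hit_prob_within p A B k)"
  by (rule integrable_pmf_bounded[of _ 1]) (use hit_prob_within_bounds in auto)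

lemma hit_prob_within_le_hit_prob: "hit_prob_within p A B k j \<le> hit_prob p A B j"
  unfolding hit_prob_def
  by (rule cSUP_upper) (auto intro!: bdd_aboveI[of _ 1] simp: hit_prob_within_bounds)

lemma hit_prob_bounds: "0 \<le> hit_prob p A B j \<and> hit_prob p A B j \<le> 1"
proof
  show "0 \<le> hit_prob p A B j"
    using hit_prob_within_le_hit_prob[of p A B 0 j] hit_prob_within_bounds[of p A B 0 j] by linarith
  show "hit_prob p A B j \<le> 1"
    unfolding hit_prob_def by (rule cSUP_least) (auto simp: hit_prob_within_bounds)
qed

lemma integrable_hit_prob: "integrable (measure_pmf N) (hit_prob p A B)"
  by (rule integrable_pmf_bounded[of _ 1]) (use hit_prob_bounds in auto)

lemma hit_prob_eq_0: "j \<in> B \<Longrightarrow> j \<notin> A \<Longrightarrow> hit_prob p A B j = 0"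
proof -
  assume "j \<in> B" "j \<notin> A"
  then have "hit_prob_within p A B k j = 0" for k by (cases k) auto
  then show ?thesis by (simp add: hit_prob_def)
qed

lemma hit_prob_le_expectation:
  assumes "j \<notin> A" "j \<notin> B"
  shows "hit_prob p A B j \<le> measure_pmf.expectation (transition_pmf p j) (hit_prob p A B)"
  unfolding hit_prob_def[of p A B j]
proof (rule cSUP_least)
  fix k
  show "hit_prob_within p A B k j \<le> measure_pmf.expectation (transition_pmf p j) (hit_prob p A B)"
  proof (cases k)
    case 0
    then show ?thesis using assms hit_prob_bounds by (simp add: integral_nonneg)
  next
    case (Suc k')
    have "measure_pmf.expectation (transition_pmf p j) (hit_prob_within p A B k')
        \<le> measure_pmf.expectation (transition_pmf p j) (hit_prob p A B)"
      by (intro integral_mono integrable_hit_prob_within integrable_hit_prob hit_prob_within_le_hit_prob)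
    then show ?thesis using Suc assms by simp
  qed
qed simp

context stochastic_kernel
begin

lemma prob_path_pmf_hits_before:
  "j \<ge> 1 \<Longrightarrow> measure_pmf.prob (path_pmf p k j) {ys. hits_before A B ys} = hit_prob_within p A B k j"
proof (induction k arbitrary: j)
  case (Suc k)
  have "measure_pmf.prob (path_pmf p (Suc k) j) {ys. hits_before A B ys} =
      measure_pmf.expectation (transition_pmf p j)
        (\<lambda>l. measure_pmf.prob (path_pmf p k l) (Cons j -` {ys. hits_before A B ys}))"
    by (simp add: prob_bind_pmf measure_map_pmf)
  also have "\<dots> = measure_pmf.expectation (transition_pmf p j)
      (\<lambda>l. if j \<in> A then 1 else if j \<in> B then 0 else hit_prob_within p A B k l)"
  proof (rule expectation_pmf_cong)
    fix l assume "l \<in> set_pmf (transition_pmf p j)"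
    then have "l \<ge> 1" using set_transition_pmf_pos Suc.prems by blast
    moreover have "Cons j -` {ys. hits_before A B ys} =
        (if j \<in> A then UNIV else if j \<in> B then {} else {ys. hits_before A B ys})"
      by (auto simp: hits_before_Cons)
    ultimately show "measure_pmf.prob (path_pmf p k l) (Cons j -` {ys. hits_before A B ys}) =
        (if j \<in> A then 1 else if j \<in> B then 0 else hit_prob_within p A B k l)"
      using Suc.IH by simp
  qed
  finally show ?case by simp
qed (simp add: hits_before_Cons)

text \<open>A comparison principle. The disjunction in \<open>V_super\<close> lets superharmonicity fail at states
  where the domination is already known.\<close>

lemma hit_prob_le_supersolution:
  assumes V_nonneg: "\<And>j. 0 \<le> V j" and V_bounded: "\<And>j. V j \<le> C"
    and V_A: "\<And>j. j \<in> A \<Longrightarrow> 1 \<le> V j"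
    and V_super: "\<And>j. j \<ge> 1 \<Longrightarrow> j \<notin> A \<Longrightarrow> j \<notin> B \<Longrightarrow>
        hit_prob p A B j \<le> V j \<or> measure_pmf.expectation (transition_pmf p j) V \<le> V j"
    and "j \<ge> 1"
  shows "hit_prob p A B j \<le> V j"
proof -
  have "hit_prob_within p A B k j \<le> V j" if "j \<ge> 1" for k j
    using that
  proof (induction k arbitrary: j)
    case (Suc k)
    show ?case
    proof (cases "j \<in> A \<or> j \<in> B")
      case False
      have "integrable (measure_pmf (transition_pmf p j)) V"
        by (rule integrable_pmf_bounded[of _ C]) (use V_nonneg V_bounded in auto)
      then have "measure_pmf.expectation (transition_pmf p j) (hit_prob_within p A B k)
          \<le> measure_pmf.expectation (transition_pmf p j) V"
        using Suc set_transition_pmf_pos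
        by (intro integral_mono_AE integrable_hit_prob_within) (auto simp: AE_measure_pmf_iff)
      then show ?thesis
        using False V_super[OF Suc.prems] hit_prob_within_le_hit_prob[of p A B "Suc k" j] by auto
    qed (use V_A V_nonneg in auto)
  qed (use V_A V_nonneg in simp)
  then show ?thesis unfolding hit_prob_def using \<open>j \<ge> 1\<close> by (intro cSUP_least) auto
qed

lemma hit_prob_le_step:
  assumes "j \<ge> 1" "j \<notin> A" "j \<notin> B"
    and hit_le: "\<And>l. l \<ge> 1 \<Longrightarrow> hit_prob p A B l \<le> f l + M"
    and f_01: "\<And>l. 0 \<le> f l \<and> f l \<le> 1"
  shows "hit_prob p A B j \<le> measure_pmf.expectation (transition_pmf p j) f + M
    + (hit_prob p A B l - M) * pmf (transition_pmf p j) l"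
proof -
  let ?c = "hit_prob p A B l - f l - M"
  have int_f: "integrable (measure_pmf (transition_pmf p j)) f"
    by (rule integrable_pmf_bounded[of _ 1]) (use f_01 in auto)
  have int_l: "integrable (measure_pmf (transition_pmf p j)) (indicator {l} :: nat \<Rightarrow> real)"
    by (rule integrable_pmf_bounded[of _ 1]) (auto simp: indicator_def)
  have "hit_prob p A B j \<le> measure_pmf.expectation (transition_pmf p j) (hit_prob p A B)"
    by (rule hit_prob_le_expectation[OF assms(2,3)])
  also have "\<dots> \<le> measure_pmf.expectation (transition_pmf p j) (\<lambda>x. f x + M + ?c * indicator {l} x)"
  proof (rule integral_mono_AE[OF integrable_hit_prob])
    show "integrable (measure_pmf (transition_pmf p j)) (\<lambda>x. f x + M + ?c * indicator {l} x)"
      using int_f int_l by (intro Bochner_Integration.integrable_add) auto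
    show "AE x in measure_pmf (transition_pmf p j). hit_prob p A B x \<le> f x + M + ?c * indicator {l} x"
      using hit_le set_transition_pmf_pos[OF assms(1)]
        by (auto simp: AE_measure_pmf_iff indicator_def)
  qed
  also have "\<dots> = measure_pmf.expectation (transition_pmf p j) f + M + ?c * pmf (transition_pmf p j) l"
    using int_f int_l by (simp add: measure_pmf_single)
  also have "\<dots> \<le> measure_pmf.expectation (transition_pmf p j) f + M
      + (hit_prob p A B l - M) * pmf (transition_pmf p j) l"
    using f_01[of l] pmf_nonneg[of "transition_pmf p j" l] by (simp add: algebra_simps)
  finally show ?thesis .
qed

text \<open>Iterating \<open>hit_prob_le_step\<close> along a path \<open>ys\<close> into \<open>B\<close> replaces \<open>M\<close> by \<open>0\<close> with the
  probability of \<open>ys\<close>.\<close>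

lemma hit_prob_le_along_path:
  assumes hit_le: "\<And>l. l \<ge> 1 \<Longrightarrow> hit_prob p A B l \<le> f l + M" and "M \<ge> 0"
    and f_01: "\<And>l. 0 \<le> f l \<and> f l \<le> 1" and "R \<ge> 0"
  shows "j \<ge> 1 \<Longrightarrow> ys \<in> set_pmf (path_pmf p k j) \<Longrightarrow> last ys \<in> B \<Longrightarrow> (\<forall>y\<in>set ys. y \<notin> A) \<Longrightarrow>
     (\<forall>y\<in>set ys. measure_pmf.expectation (transition_pmf p y) f \<le> R) \<Longrightarrow>
     hit_prob p A B j \<le> real (Suc k) * R + (1 - pmf (path_pmf p k j) ys) * M"
proof (induction k arbitrary: j ys)
  case 0
  then show ?case using hit_prob_eq_0[of j B A p] \<open>R \<ge> 0\<close> by (simp add: pmf_return)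
next
  case (Suc k)
  from Suc.prems(2) obtain l ys' where l: "l \<in> set_pmf (transition_pmf p j)"
    and ys': "ys' \<in> set_pmf (path_pmf p k l)" and ys: "ys = j # ys'" by auto
  have l1: "l \<ge> 1" using set_transition_pmf_pos[OF Suc.prems(1) l] .
  have "ys' ! 0 = l" "ys' \<noteq> []" using set_path_pmf[OF l1 ys'] by auto
  then have path: "pmf (path_pmf p (Suc k) j) ys = pmf (transition_pmf p j) l * pmf (path_pmf p k l) ys'"
    unfolding ys using pmf_path_pmf_Cons[OF Suc.prems(1)] by simp
  have jA: "j \<notin> A" using Suc.prems(4) ys by auto
  show ?case
  proof (cases "j \<in> B")
    case True
    then show ?thesis
      using hit_prob_eq_0[OF True jA] \<open>R \<ge> 0\<close> \<open>M \<ge> 0\<close> pmf_le_1[of _ ys] by simp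
  next
    case False
    let ?q = "pmf (transition_pmf p j) l"
    have IH: "hit_prob p A B l \<le> real (Suc k) * R + (1 - pmf (path_pmf p k l) ys') * M"
      using Suc.IH[OF l1 ys'] Suc.prems(3-5) ys \<open>ys' \<noteq> []\<close> by auto
    have "hit_prob p A B j \<le> R + M + (hit_prob p A B l - M) * ?q"
      using hit_prob_le_step[OF Suc.prems(1) jA False hit_le f_01, of l] Suc.prems(5) ys by auto
    also have "\<dots> \<le> R + M + (real (Suc k) * R - pmf (path_pmf p k l) ys' * M) * ?q"
      using IH pmf_nonneg[of "transition_pmf p j" l]
      by (intro add_left_mono mult_right_mono) (auto simp: algebra_simps)
    also have "\<dots> \<le> real (Suc (Suc k)) * R + (1 - pmf (path_pmf p (Suc k) j) ys) * M"
      using mult_left_le_one_le[OF _ pmf_nonneg pmf_le_1, of "real (Suc k) * R" "transition_pmf p j" l]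
        \<open>R \<ge> 0\<close>
      unfolding path by (simp add: algebra_simps)
    finally show ?thesis .
  qed
qed

end

section \<open>The Lyapunov function \<open>min 1 ((l / L) ^ \<beta>)\<close>\<close>

definition capped_power :: "real \<Rightarrow> real \<Rightarrow> nat \<Rightarrow> real" where
  "capped_power \<beta> L l = min 1 ((real l / L) powr \<beta>)"

lemma capped_power_bounds: "0 \<le> capped_power \<beta> L l \<and> capped_power \<beta> L l \<le> 1"
  unfolding capped_power_def by auto

lemma integrable_capped_power: "integrable (measure_pmf N) (capped_power \<beta> L)"
  by (rule integrable_pmf_bounded[of _ 1]) (use capped_power_bounds in auto)

lemma capped_power_eq_1: "L > 0 \<Longrightarrow> \<beta> > 0 \<Longrightarrow> L \<le> real l \<Longrightarrow> capped_power \<beta> L l = 1"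
  unfolding capped_power_def by (simp add: ge_one_powr_ge_zero)

lemma capped_power_antimono: "0 < L' \<Longrightarrow> L' \<le> L \<Longrightarrow> \<beta> > 0 \<Longrightarrow> capped_power \<beta> L l \<le> capped_power \<beta> L' l"
  unfolding capped_power_def
    by (intro min.mono order.refl powr_mono2) (auto intro: divide_left_mono)

lemma capped_power_le_powr: "L > 0 \<Longrightarrow> \<beta> > 0 \<Longrightarrow> real l / L \<le> \<epsilon> \<Longrightarrow> capped_power \<beta> L l \<le> \<epsilon> powr \<beta>"
  unfolding capped_power_def by (simp add: powr_mono2 min.coboundedI2)

lemma expectation_capped_power_tendsto_0:
  assumes "\<beta> > 0"
  shows "(\<lambda>n. measure_pmf.expectation N (capped_power \<beta> (real n))) \<longlonglongrightarrow> 0"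
proof -
  have "(\<lambda>n. min 1 ((real l / real n) powr \<beta>)) \<longlonglongrightarrow> min 1 0" for l
    using assms by (intro tendsto_min tendsto_zero_powrI lim_const_over_n tendsto_const) auto
  then have "(\<lambda>n. measure_pmf.expectation N (capped_power \<beta> (real n)))
      \<longlonglongrightarrow> measure_pmf.expectation N (\<lambda>_. 0::real)"
    by (intro integral_dominated_convergence[where w="\<lambda>_. 1"])
      (auto simp: capped_power_def abs_le_iff)
  then show ?thesis by simp
qed

lemma expectation_capped_power_uniformly_small:
  assumes "\<beta> > 0" "finite Y" "\<eta> > 0"
  obtains L0 where "L0 > 0"
    "\<And>L y. L \<ge> L0 \<Longrightarrow> y \<in> Y \<Longrightarrow> measure_pmf.expectation (N y) (capped_power \<beta> L) \<le> \<eta>"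
proof -
  have "\<forall>\<^sub>F n in sequentially. \<forall>y\<in>Y. measure_pmf.expectation (N y) (capped_power \<beta> (real n)) < \<eta>"
    using expectation_capped_power_tendsto_0[OF \<open>\<beta> > 0\<close>] \<open>\<eta> > 0\<close> \<open>finite Y\<close>
    by (intro eventually_ball_finite) (auto simp: order_tendsto_iff)
  then obtain n where n: "\<And>m y. m \<ge> n \<Longrightarrow> y \<in> Y \<Longrightarrow>
      measure_pmf.expectation (N y) (capped_power \<beta> (real m)) < \<eta>"
    by (auto simp: eventually_sequentially)
  have "measure_pmf.expectation (N y) (capped_power \<beta> L) \<le> \<eta>" if "L \<ge> real (Suc n)" "y \<in> Y" for L y
  proof -
    have "measure_pmf.expectation (N y) (capped_power \<beta> L)
        \<le> measure_pmf.expectation (N y) (capped_power \<beta> (real (Suc n)))"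
      using that \<open>\<beta> > 0\<close> by (intro integral_mono integrable_capped_power capped_power_antimono) auto
    also have "\<dots> < \<eta>" by (rule n[OF _ \<open>y \<in> Y\<close>]) simp
    finally show ?thesis by simp
  qed
  then show thesis using that[of "real (Suc n)"] by simp
qed

context stochastic_kernel
begin

lemma finite_reaching_paths:
  assumes "finite S"
    and reach: "\<And>j. j \<in> S \<Longrightarrow> \<exists>k ys. ys \<in> set_pmf (path_pmf p k j) \<and> last ys \<in> B"
  obtains w T Y where "0 < w" "w \<le> 1" "1 \<le> T" "finite Y"
    "\<And>j. j \<in> S \<Longrightarrow> \<exists>k ys. ys \<in> set_pmf (path_pmf p k j) \<and> last ys \<in> B \<and> set ys \<subseteq> Y \<and>
        real (Suc k) \<le> T \<and> w \<le> pmf (path_pmf p k j) ys"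
proof -
  obtain k ys where path: "\<And>j. j \<in> S \<Longrightarrow> ys j \<in> set_pmf (path_pmf p (k j) j) \<and> last (ys j) \<in> B"
    using reach by metis
  define w where "w = Min (insert 1 ((\<lambda>j. pmf (path_pmf p (k j) j) (ys j)) ` S))"
  define T where "T = Max (insert 1 ((\<lambda>j. real (Suc (k j))) ` S))"
  define Y where "Y = (\<Union>j\<in>S. set (ys j))"
  have "0 < w" unfolding w_def using assms(1) path by (subst Min_gr_iff) (auto simp: pmf_positive)
  moreover have "w \<le> 1" "1 \<le> T" "finite Y" unfolding w_def T_def Y_def using assms(1) by auto
  moreover have "\<exists>k ys. ys \<in> set_pmf (path_pmf p k j) \<and> last ys \<in> B \<and> set ys \<subseteq> Y \<and>
        real (Suc k) \<le> T \<and> w \<le> pmf (path_pmf p k j) ys" if "j \<in> S" for j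
    using that path[OF that] assms(1) unfolding w_def T_def Y_def
    by (intro exI[of _ "k j"] exI[of _ "ys j"]) auto
  ultimately show thesis using that by blast
qed

lemma hit_prob_le_capped_power_plus:
  assumes "\<beta> > 0" "L > 0" "M \<ge> 0"
    and super: "\<And>j. j \<ge> J \<Longrightarrow>
      measure_pmf.expectation (transition_pmf p j) (capped_power \<beta> L) \<le> capped_power \<beta> L j"
    and small: "\<And>j. 1 \<le> j \<Longrightarrow> j < J \<Longrightarrow> j \<notin> B \<Longrightarrow> hit_prob p {l. L \<le> real l} B j \<le> M"
    and "j \<ge> 1"
  shows "hit_prob p {l. L \<le> real l} B j \<le> capped_power \<beta> L j + M"
proof (rule hit_prob_le_supersolution[where C = "1 + M"])
  show "0 \<le> capped_power \<beta> L j + M" "capped_power \<beta> L j + M \<le> 1 + M" for j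
    using capped_power_bounds[of \<beta> L j] \<open>M \<ge> 0\<close> by auto
  show "1 \<le> capped_power \<beta> L j + M" if "j \<in> {l. L \<le> real l}" for j
    using capped_power_eq_1[OF \<open>L > 0\<close> \<open>\<beta> > 0\<close>] that \<open>M \<ge> 0\<close> by simp
  fix j :: nat assume j: "j \<ge> 1" "j \<notin> {l. L \<le> real l}" "j \<notin> B"
  show "hit_prob p {l. L \<le> real l} B j \<le> capped_power \<beta> L j + M \<or>
      measure_pmf.expectation (transition_pmf p j) (\<lambda>l. capped_power \<beta> L l + M) \<le> capped_power \<beta> L j + M"
  proof (cases "j < J")
    case True
    then show ?thesis using small j capped_power_bounds[of \<beta> L j] by force
  next
    case False
    then show ?thesis using super[of j] integrable_capped_power by simp
  qed
qed (use \<open>j \<ge> 1\<close> in simp)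

text \<open>Away from the finitely many states below \<open>J\<close>, where superharmonicity may fail, the
  comparison principle gives \<open>hit_prob \<le> capped_power + M\<close> with \<open>M\<close> the largest hitting
  probability from those states. From each of them a path reaches \<open>B\<close> with probability
  at least \<open>w\<close> while \<open>capped_power\<close> is uniformly small along it, so \<open>M \<le> (1 - w) M + w \<eta>\<close>.\<close>

lemma hit_prob_le_capped_power_of_paths:
  assumes "\<beta> > 0" "L > 0" "\<eta> \<ge> 0" "0 < w" "1 \<le> T"
    and super: "\<And>j. j \<ge> J \<Longrightarrow>
      measure_pmf.expectation (transition_pmf p j) (capped_power \<beta> L) \<le> capped_power \<beta> L j"
    and paths: "\<And>j. 1 \<le> j \<Longrightarrow> j < J \<Longrightarrow> j \<notin> B \<Longrightarrow> \<exists>k ys. ys \<in> set_pmf (path_pmf p k j) \<and>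
      last ys \<in> B \<and> real (Suc k) \<le> T \<and> w \<le> pmf (path_pmf p k j) ys \<and>
      (\<forall>y\<in>set ys. real y < L \<and>
        measure_pmf.expectation (transition_pmf p y) (capped_power \<beta> L) \<le> \<eta> * w / T)"
    and "j \<ge> 1"
  shows "hit_prob p {l. L \<le> real l} B j \<le> capped_power \<beta> L j + \<eta>"
proof -
  let ?A = "{l. L \<le> real l}"
  define S where "S = {j. 1 \<le> j \<and> j < J \<and> j \<notin> B}"
  define M where "M = Max (insert 0 (hit_prob p ?A B ` S))"
  have "finite S" unfolding S_def by auto
  then have "M \<ge> 0" and hit_S: "\<And>j. j \<in> S \<Longrightarrow> hit_prob p ?A B j \<le> M" unfolding M_def by auto
  have hit_le: "hit_prob p ?A B l \<le> capped_power \<beta> L l + M" if "l \<ge> 1" for l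
    using hit_prob_le_capped_power_plus[OF \<open>\<beta> > 0\<close> \<open>L > 0\<close> \<open>M \<ge> 0\<close> super _ that] hit_S
    unfolding S_def by blast
  have path_bound: "hit_prob p ?A B j \<le> T * (\<eta> * w / T) + (1 - w) * M" if "j \<in> S" for j
  proof -
    obtain k ys where ys: "ys \<in> set_pmf (path_pmf p k j)" "last ys \<in> B"
      and "real (Suc k) \<le> T" "w \<le> pmf (path_pmf p k j) ys"
      and along: "\<forall>y\<in>set ys. real y < L \<and>
        measure_pmf.expectation (transition_pmf p y) (capped_power \<beta> L) \<le> \<eta> * w / T"
      using paths \<open>j \<in> S\<close> unfolding S_def by blast
    have "hit_prob p ?A B j \<le> real (Suc k) * (\<eta> * w / T) + (1 - pmf (path_pmf p k j) ys) * M"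
      using hit_prob_le_along_path[OF hit_le \<open>M \<ge> 0\<close> capped_power_bounds _ _ ys, of "\<eta> * w / T"]
        along \<open>j \<in> S\<close> assms(3-5) unfolding S_def by (force simp: not_le)
    also have "\<dots> \<le> T * (\<eta> * w / T) + (1 - w) * M"
      using \<open>real (Suc k) \<le> T\<close> \<open>w \<le> pmf (path_pmf p k j) ys\<close> assms(3-5) \<open>M \<ge> 0\<close>
      by (intro add_mono mult_right_mono) auto
    finally show ?thesis .
  qed
  have "M \<le> \<eta> * w + (1 - w) * M"
  proof (cases "M = 0")
    case False
    then obtain j where "j \<in> S" "M = hit_prob p ?A B j"
      unfolding M_def using \<open>finite S\<close> Max_in[of "insert 0 (hit_prob p ?A B ` S)"] by auto
    then show ?thesis using path_bound[of j] \<open>1 \<le> T\<close> by simp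
  qed (use assms(3,4) in simp)
  then have "w * M \<le> w * \<eta>" by (simp add: algebra_simps)
  then show ?thesis using hit_le[OF \<open>j \<ge> 1\<close>] \<open>w > 0\<close> by simp
qed

lemma hit_prob_le_capped_power:
  assumes "\<beta> > 0" "\<eta> > 0" "finite B"
    and super: "\<And>j L. j \<ge> J \<Longrightarrow> L > 0 \<Longrightarrow>
      measure_pmf.expectation (transition_pmf p j) (capped_power \<beta> L) \<le> capped_power \<beta> L j"
    and reach: "\<And>j. j \<ge> 1 \<Longrightarrow> \<exists>k ys. ys \<in> set_pmf (path_pmf p k j) \<and> last ys \<in> B"
  shows "\<exists>L0. \<forall>L\<ge>L0. \<forall>j\<ge>1. hit_prob p {l. L \<le> real l} B j \<le> capped_power \<beta> L j + \<eta>"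
proof -
  define S where "S = {j. 1 \<le> j \<and> j < J \<and> j \<notin> B}"
  have "finite S" unfolding S_def by auto
  moreover have "\<And>j. j \<in> S \<Longrightarrow> \<exists>k ys. ys \<in> set_pmf (path_pmf p k j) \<and> last ys \<in> B"
    using reach unfolding S_def by auto
  ultimately obtain w T Y where w: "0 < w" "w \<le> 1" and "1 \<le> T" "finite Y"
    and paths: "\<And>j. j \<in> S \<Longrightarrow> \<exists>k ys. ys \<in> set_pmf (path_pmf p k j) \<and> last ys \<in> B \<and>
        set ys \<subseteq> Y \<and> real (Suc k) \<le> T \<and> w \<le> pmf (path_pmf p k j) ys"
    by (rule finite_reaching_paths) blast+
  have "\<eta> * w / T > 0" using \<open>\<eta> > 0\<close> w \<open>1 \<le> T\<close> by auto
  then obtain L1 where "L1 > 0" and small: "\<And>L y. L \<ge> L1 \<Longrightarrow> y \<in> Y \<Longrightarrow>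
      measure_pmf.expectation (transition_pmf p y) (capped_power \<beta> L) \<le> \<eta> * w / T"
    using expectation_capped_power_uniformly_small[OF \<open>\<beta> > 0\<close> \<open>finite Y\<close>] by blast
  define L0 where "L0 = max L1 (real (Max (insert 0 (B \<union> Y))) + 1)"
  have "hit_prob p {l. L \<le> real l} B j \<le> capped_power \<beta> L j + \<eta>" if "L \<ge> L0" "j \<ge> 1" for L j
  proof (rule hit_prob_le_capped_power_of_paths[OF \<open>\<beta> > 0\<close> _ _ \<open>0 < w\<close> \<open>1 \<le> T\<close> _ _ \<open>j \<ge> 1\<close>])
    show "L > 0" using \<open>L \<ge> L0\<close> \<open>L1 > 0\<close> unfolding L0_def by auto
    then show "measure_pmf.expectation (transition_pmf p j) (capped_power \<beta> L) \<le> capped_power \<beta> L j"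
      if "j \<ge> J" for j
      using super that by blast
    have below: "real y < L" if "y \<in> B \<union> Y" for y
    proof -
      have "real y \<le> real (Max (insert 0 (B \<union> Y)))" using that \<open>finite B\<close> \<open>finite Y\<close> by simp
      then show ?thesis using \<open>L \<ge> L0\<close> unfolding L0_def by linarith
    qed
    show "\<exists>k ys. ys \<in> set_pmf (path_pmf p k j) \<and> last ys \<in> B \<and> real (Suc k) \<le> T \<and>
        w \<le> pmf (path_pmf p k j) ys \<and> (\<forall>y\<in>set ys. real y < L \<and>
        measure_pmf.expectation (transition_pmf p y) (capped_power \<beta> L) \<le> \<eta> * w / T)"
      if "1 \<le> j" "j < J" "j \<notin> B" for j
      using paths[of j] that below small \<open>L \<ge> L0\<close> unfolding S_def L0_def by fastforce
  qed (use \<open>\<eta> > 0\<close> in simp)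
  then show ?thesis by blast
qed

end

lemma less_hit_time_iff: "enat t < hit_time f B \<longleftrightarrow> (\<forall>s\<le>t. f s \<notin> B)"
proof (cases "\<exists>k. f k \<in> B")
  case True
  let ?h = "LEAST k. f k \<in> B"
  have "f ?h \<in> B" using True by (rule LeastI_ex)
  moreover have "f s \<notin> B" if "s < ?h" for s using that by (rule not_less_Least)
  ultimately have "t < ?h \<longleftrightarrow> (\<forall>s\<le>t. f s \<notin> B)" by (metis le_less_trans not_le)
  then show ?thesis using True by (simp add: hit_time_def)
qed (simp add: hit_time_def)

lemma hit_time_le: "f t \<in> A \<Longrightarrow> hit_time f A \<le> enat t"
  unfolding hit_time_def by (auto intro: Least_le)

lemma hit_time_eq_enatD: "hit_time f A = enat t \<Longrightarrow> f t \<in> A"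
  unfolding hit_time_def by (metis LeastI_ex enat.inject infinity_ne_i1 enat.distinct(1))

lemma hit_time_less_iff:
  assumes "A \<inter> B = {}"
  shows "hit_time f A < hit_time f B \<longleftrightarrow> (\<exists>t. f t \<in> A \<and> (\<forall>s<t. f s \<notin> B))"
proof
  assume less: "hit_time f A < hit_time f B"
  then obtain t where t: "hit_time f A = enat t" by (cases "hit_time f A") auto
  then have "\<forall>s\<le>t. f s \<notin> B" using less less_hit_time_iff by metis
  then show "\<exists>t. f t \<in> A \<and> (\<forall>s<t. f s \<notin> B)" using hit_time_eq_enatD[OF t] by auto
next
  assume "\<exists>t. f t \<in> A \<and> (\<forall>s<t. f s \<notin> B)"
  then obtain t where "f t \<in> A" "\<forall>s<t. f s \<notin> B" by blast
  then have "enat t < hit_time f B" using assms by (auto simp: less_hit_time_iff le_less)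
  then show "hit_time f A < hit_time f B" using hit_time_le[of f t A] \<open>f t \<in> A\<close>
    by (meson le_less_trans)
qed

locale nat_markov_chain = stochastic_kernel p + prob_space M
  for p :: "nat \<Rightarrow> nat \<Rightarrow> real" and M :: "'a measure" +
  fixes X :: "nat \<Rightarrow> nat \<Rightarrow> 'a \<Rightarrow> nat"
  assumes measurable_X: "\<And>i m. X i m \<in> measurable M (count_space UNIV)"
    and X_pos: "\<And>i m \<omega>. \<omega> \<in> space M \<Longrightarrow> X i m \<omega> \<ge> 1"
    and X_markov: "\<And>i k (x :: nat \<Rightarrow> nat). i \<ge> 1 \<Longrightarrow> (\<forall>m\<le>k. x m \<ge> 1) \<Longrightarrow>
          measure M {\<omega> \<in> space M. \<forall>m\<le>k. X i m \<omega> = x m}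
            = (if x 0 = i then 1 else 0) * (\<Prod>m<k. p (x m) (x (Suc m)))"
begin

abbreviation path :: "nat \<Rightarrow> nat \<Rightarrow> 'a \<Rightarrow> nat list" where
  "path i k \<omega> \<equiv> map (\<lambda>m. X i m \<omega>) [0..<Suc k]"

lemma path_eq_iff: "length ys = Suc k \<Longrightarrow> path i k \<omega> = ys \<longleftrightarrow> (\<forall>m\<le>k. X i m \<omega> = ys ! m)"
  by (auto simp: list_eq_iff_nth_eq less_Suc_eq_le simp del: upt_Suc)

lemma measurable_path: "path i k \<in> measurable M (count_space UNIV)"
proof (subst measurable_count_space_eq2_countable, safe)
  fix ys :: "nat list"
  have "{\<omega> \<in> space M. X i m \<omega> = c} \<in> sets M" for m c
    using measurable_X by measurable
  moreover have "path i k -` {ys} \<inter> space M =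
      (if length ys = Suc k then {\<omega> \<in> space M. \<forall>m\<in>{..k}. X i m \<omega> = ys ! m} else {})"
    using path_eq_iff[of ys k i] by (auto simp del: upt_Suc)
  ultimately show "path i k -` {ys} \<inter> space M \<in> sets M"
    by (auto intro!: sets.sets_Collect_finite_All)
qed simp

lemma sets_path: "{\<omega> \<in> space M. path i k \<omega> \<in> S} \<in> sets M"
  using measurable_sets[OF measurable_path, of S] by (simp add: vimage_def Int_def conj_commute)

lemma prob_path_eq_path_pmf:
  assumes "i \<ge> 1"
  shows "measure M {\<omega> \<in> space M. path i k \<omega> \<in> S} = measure_pmf.prob (path_pmf p k i) S"
proof -
  have "distr M (count_space UNIV) (path i k) = measure_pmf (path_pmf p k i)"
  proof (rule measure_eqI_countable[where A = UNIV])
    fix ys :: "nat list"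
    have "measure M (path i k -` {ys} \<inter> space M) = pmf (path_pmf p k i) ys"
    proof (cases "length ys = Suc k \<and> (\<forall>y\<in>set ys. y \<ge> 1)")
      case True
      then have "\<forall>m\<le>k. ys ! m \<ge> 1" by (auto simp: less_Suc_eq_le[symmetric])
      moreover have "path i k -` {ys} \<inter> space M = {\<omega> \<in> space M. \<forall>m\<le>k. X i m \<omega> = ys ! m}"
        using True path_eq_iff[of ys k i] by auto
      ultimately show ?thesis
        using X_markov[OF assms] pmf_path_pmf[OF assms] True by simp
    next
      case False
      then have "path i k -` {ys} \<inter> space M = {}" using X_pos by auto
      moreover have "ys \<notin> set_pmf (path_pmf p k i)" using False set_path_pmf[OF assms] by blast
      ultimately show ?thesis by (simp add: set_pmf_eq)
    qed
    then show "emeasure (distr M (count_space UNIV) (path i k)) {ys} = emeasure (measure_pmf (path_pmf p k i)) {ys}"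
      using measurable_path by (simp add: emeasure_distr emeasure_eq_measure emeasure_pmf_single)
  qed auto
  moreover have "measure M {\<omega> \<in> space M. path i k \<omega> \<in> S} = measure (distr M (count_space UNIV) (path i k)) S"
    using measurable_path by (subst measure_distr) (auto simp: vimage_def Int_def conj_commute)
  ultimately show ?thesis by simp
qed

lemma path_reaching:
  assumes "i \<ge> 1" and reach: "measure M {\<omega> \<in> space M. \<exists>m. X i m \<omega> \<in> B} > 0"
  shows "\<exists>k ys. ys \<in> set_pmf (path_pmf p k i) \<and> last ys \<in> B"
proof -
  have "\<exists>m. measure M {\<omega> \<in> space M. X i m \<omega> \<in> B} \<noteq> 0"
  proof (rule ccontr)
    assume "\<not> ?thesis"
    moreover have "{\<omega> \<in> space M. X i m \<omega> \<in> B} \<in> sets M" for m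
      using measurable_X by measurable
    ultimately have "measure M (\<Union>m. {\<omega> \<in> space M. X i m \<omega> \<in> B}) = 0"
      by (intro measure_countably_zero) auto
    moreover have "(\<Union>m. {\<omega> \<in> space M. X i m \<omega> \<in> B}) = {\<omega> \<in> space M. \<exists>m. X i m \<omega> \<in> B}" by auto
    ultimately show False using reach by simp
  qed
  then obtain m where "measure M {\<omega> \<in> space M. path i m \<omega> \<in> {ys. last ys \<in> B}} \<noteq> 0"
    by (auto simp: last_map simp del: upt_Suc)
  then have "measure_pmf.prob (path_pmf p m i) {ys. last ys \<in> B} \<noteq> 0"
    by (metis prob_path_eq_path_pmf[OF assms(1)])
  then show ?thesis by (auto simp: measure_pmf_zero_iff)
qed

lemma path_reaching_atMost:
  assumes "i \<ge> 1" "measure M {\<omega> \<in> space M. \<exists>m. X i m \<omega> \<le> K} > 0"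
  shows "\<exists>k ys. ys \<in> set_pmf (path_pmf p k i) \<and> last ys \<in> {1..K}"
proof (rule path_reaching[OF assms(1)])
  have "{\<omega> \<in> space M. \<exists>m. X i m \<omega> \<in> {1..K}} = {\<omega> \<in> space M. \<exists>m. X i m \<omega> \<le> K}"
    using X_pos by fastforce
  then show "measure M {\<omega> \<in> space M. \<exists>m. X i m \<omega> \<in> {1..K}} > 0" using assms(2) by simp
qed

lemma prob_hit_time_less_le_hit_prob:
  assumes "i \<ge> 1" "A \<inter> B = {}"
  shows "measure M {\<omega> \<in> space M. hit_time (\<lambda>k. X i k \<omega>) A < hit_time (\<lambda>k. X i k \<omega>) B}
    \<le> hit_prob p A B i"
proof -
  define E where "E k = {\<omega> \<in> space M. path i k \<omega> \<in> {ys. hits_before A B ys}}" for k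
  have "incseq E"
  proof (rule incseq_SucI)
    show "E k \<subseteq> E (Suc k)" for k
      unfolding E_def mem_Collect_eq hits_before_map_upt using less_SucI by blast
  qed
  moreover have "range E \<subseteq> sets M"
    unfolding E_def by (blast intro: sets_path)
  ultimately have "(\<lambda>k. measure M (E k)) \<longlonglongrightarrow> measure M (\<Union>k. E k)"
    by (intro finite_Lim_measure_incseq) auto
  moreover have "measure M (E k) \<le> hit_prob p A B i" for k
    unfolding E_def prob_path_eq_path_pmf[OF assms(1)] prob_path_pmf_hits_before[OF assms(1)]
    by (rule hit_prob_within_le_hit_prob)
  ultimately have "measure M (\<Union>k. E k) \<le> hit_prob p A B i"
    by (intro LIMSEQ_le_const2) auto
  moreover have "{\<omega> \<in> space M. hit_time (\<lambda>k. X i k \<omega>) A < hit_time (\<lambda>k. X i k \<omega>) B} = (\<Union>k. E k)"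
    unfolding E_def hit_time_less_iff[OF assms(2)]
      by (auto simp: hits_before_map_upt simp del: upt_Suc)
  ultimately show ?thesis by simp
qed

end

definition superharmonic_power :: "(nat \<Rightarrow> nat \<Rightarrow> real) \<Rightarrow> real \<Rightarrow> nat \<Rightarrow> bool" where
  "superharmonic_power p \<beta> j \<longleftrightarrow> summable (\<lambda>k. p j (Suc k) * real (Suc k) powr \<beta>) \<and>
     (\<Sum>k. p j (Suc k) * real (Suc k) powr \<beta>) \<le> real j powr \<beta>"

context stochastic_kernel
begin

lemma expectation_capped_power_le:
  assumes "superharmonic_power p \<beta> j" "j \<ge> 1" "L > 0"
  shows "measure_pmf.expectation (transition_pmf p j) (capped_power \<beta> L) \<le> capped_power \<beta> L j"
proof -
  let ?P = "\<lambda>k. p j (Suc k) * real (Suc k) powr \<beta>"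
  let ?c = "\<lambda>k. p j (Suc k) * capped_power \<beta> L (Suc k)"
  have summable_P: "summable ?P" and sum_P: "(\<Sum>k. ?P k) \<le> real j powr \<beta>"
    using assms(1) unfolding superharmonic_power_def by auto
  have summable_p: "summable (\<lambda>k. p j (Suc k))" and sum_p: "(\<Sum>k. p j (Suc k)) = 1"
    using row_sums[OF assms(2)] by (auto simp: sums_iff)
  have c_nonneg: "0 \<le> ?c k" for k
    using capped_power_bounds[of \<beta> L "Suc k"] nonneg[of j "Suc k"] by simp
  have c_le_p: "?c k \<le> p j (Suc k)" for k
    using mult_left_le[of "capped_power \<beta> L (Suc k)" "p j (Suc k)"]
      capped_power_bounds[of \<beta> L "Suc k"] nonneg[of j "Suc k"] by blast
  have c_le_P: "?c k \<le> ?P k / L powr \<beta>" for k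
  proof -
    have "capped_power \<beta> L (Suc k) \<le> real (Suc k) powr \<beta> / L powr \<beta>"
      unfolding capped_power_def using \<open>L > 0\<close> by (simp add: powr_divide)
    then show ?thesis using nonneg[of j "Suc k"] by (metis mult_left_mono times_divide_eq_right)
  qed
  have summable_c: "summable ?c"
    by (rule summable_comparison_test'[OF summable_p, of 0])
      (metis c_nonneg c_le_p real_norm_def abs_of_nonneg)
  have "measure_pmf.expectation (transition_pmf p j) (capped_power \<beta> L) = (\<Sum>k. ?c k)"
  proof (rule expectation_transition_pmf[OF assms(2)])
    have "(\<lambda>k. \<bar>?c k\<bar>) = ?c" by (rule ext) (rule abs_of_nonneg[OF c_nonneg])
    then show "summable (\<lambda>k. \<bar>?c k\<bar>)" using summable_c by simp
  qed
  moreover have "(\<Sum>k. ?c k) \<le> 1"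
    using suminf_le[OF c_le_p summable_c summable_p] sum_p by linarith
  moreover have "(\<Sum>k. ?c k) \<le> (real j / L) powr \<beta>"
  proof -
    have "(\<Sum>k. ?c k) \<le> (\<Sum>k. ?P k / L powr \<beta>)"
      by (rule suminf_le[OF c_le_P summable_c summable_divide[OF summable_P]])
    also have "\<dots> = (\<Sum>k. ?P k) / L powr \<beta>"
      by (rule suminf_divide[OF summable_P])
    also have "\<dots> \<le> real j powr \<beta> / L powr \<beta>"
      using sum_P by (simp add: divide_right_mono)
    finally show ?thesis using \<open>L > 0\<close> by (simp add: powr_divide)
  qed
  ultimately show ?thesis unfolding capped_power_def by linarith
qed

end

context nat_markov_chain
begin

theorem prob_climb_before_K_le:
  fixes \<beta> \<epsilon> :: real and K :: nat
  assumes "\<beta> > 0" "\<epsilon> > 0"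
    and super: "\<forall>\<^sub>F j in sequentially. superharmonic_power p \<beta> j"
    and reach: "\<And>i. i \<ge> 1 \<Longrightarrow> measure M {\<omega> \<in> space M. \<exists>m. X i m \<omega> \<le> K} > 0"
  shows "\<exists>n0. \<forall>n\<ge>n0. \<forall>i::nat. 1 \<le> i \<and> real i \<le> \<epsilon>\<^sup>2 * real n \<longrightarrow>
           measure M {\<omega> \<in> space M.
              hit_time (\<lambda>k. X i k \<omega>) {m. real m \<ge> \<epsilon> * real n}
                < hit_time (\<lambda>k. X i k \<omega>) {1..K}} \<le> 2 * \<epsilon> powr \<beta>"
proof -
  obtain J where J: "\<And>j. j \<ge> J \<Longrightarrow> superharmonic_power p \<beta> j"
    using super by (auto simp: eventually_sequentially)
  have super': "measure_pmf.expectation (transition_pmf p j) (capped_power \<beta> L) \<le> capped_power \<beta> L j"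
    if "j \<ge> max J 1" "L > 0" for j L
    using expectation_capped_power_le J that by simp
  have reach': "\<exists>k ys. ys \<in> set_pmf (path_pmf p k j) \<and> last ys \<in> {1..K}" if "j \<ge> 1" for j
    using path_reaching_atMost[OF that reach[OF that]] .
  have "\<exists>L0. \<forall>L\<ge>L0. \<forall>j\<ge>1. hit_prob p {l. L \<le> real l} {1..K} j \<le> capped_power \<beta> L j + \<epsilon> powr \<beta>"
    by (rule hit_prob_le_capped_power[where J = "max J 1", OF \<open>\<beta> > 0\<close> _ finite_atLeastAtMost super' reach'])
      (use \<open>\<epsilon> > 0\<close> in simp_all)
  then obtain L0 where L0: "\<And>L j. L \<ge> L0 \<Longrightarrow> j \<ge> 1 \<Longrightarrow>
      hit_prob p {l. L \<le> real l} {1..K} j \<le> capped_power \<beta> L j + \<epsilon> powr \<beta>"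
    by blast
  define n0 where "n0 = nat \<lceil>max L0 (real K + 1) / \<epsilon>\<rceil>"
  have "measure M {\<omega> \<in> space M. hit_time (\<lambda>k. X i k \<omega>) {m. real m \<ge> \<epsilon> * real n}
      < hit_time (\<lambda>k. X i k \<omega>) {1..K}} \<le> 2 * \<epsilon> powr \<beta>"
    if "n \<ge> n0" "1 \<le> i" "real i \<le> \<epsilon>\<^sup>2 * real n" for n i
  proof -
    define L where "L = \<epsilon> * real n"
    have "max L0 (real K + 1) \<le> L"
      using \<open>n \<ge> n0\<close> \<open>\<epsilon> > 0\<close> unfolding n0_def L_def by (simp add: field_simps)
    then have "L \<ge> L0" "L > 0" and disjoint: "{l. L \<le> real l} \<inter> {1..K} = {}" by auto
    have "real i / L \<le> \<epsilon>"
      using \<open>real i \<le> \<epsilon>\<^sup>2 * real n\<close> \<open>L > 0\<close> unfolding L_def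
      by (simp add: divide_le_eq power2_eq_square mult.assoc)
    then have "capped_power \<beta> L i \<le> \<epsilon> powr \<beta>"
      using capped_power_le_powr \<open>\<beta> > 0\<close> \<open>L > 0\<close> by blast
    moreover have "{m. real m \<ge> \<epsilon> * real n} = {l. L \<le> real l}" unfolding L_def by auto
    ultimately show ?thesis
      using prob_hit_time_less_le_hit_prob[OF \<open>1 \<le> i\<close> disjoint] L0[OF \<open>L \<ge> L0\<close> \<open>1 \<le> i\<close>] by simp
  qed
  then show ?thesis by blast
qed

end

section \<open>Levy measures\<close>

definition unit_shell :: "real \<Rightarrow> real set" where
  "unit_shell \<tau> = {x. 1 - \<tau> < \<bar>x\<bar> \<and> \<bar>x\<bar> < 1 + \<tau>}"

lemma Inter_unit_shell: "(\<Inter>m::nat. unit_shell (1 / (real m + 4))) = {-1, 1}"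
proof
  show "{-1, 1} \<subseteq> (\<Inter>m. unit_shell (1 / (real m + 4)))" unfolding unit_shell_def by auto
  show "(\<Inter>m. unit_shell (1 / (real m + 4))) \<subseteq> {-1, 1}"
  proof
    fix x assume x: "x \<in> (\<Inter>m. unit_shell (1 / (real m + 4)))"
    have "\<bar>x\<bar> = 1"
    proof (rule ccontr)
      assume "\<bar>x\<bar> \<noteq> 1"
      define d where "d = \<bar>\<bar>x\<bar> - 1\<bar>"
      have "d > 0" using \<open>\<bar>x\<bar> \<noteq> 1\<close> unfolding d_def by simp
      obtain m :: nat where "1 / d < real m" using reals_Archimedean2 by blast
      then have "1 / (real m + 4) < d" using \<open>d > 0\<close> by (simp add: field_simps)
      moreover have "x \<in> unit_shell (1 / (real m + 4))" using x by auto
      ultimately show False unfolding unit_shell_def d_def by auto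
    qed
    then show "x \<in> {-1, 1}" by (auto simp: abs_if split: if_splits)
  qed
qed

locale levy_measure =
  fixes Lm :: "real measure"
  assumes sets_Lm: "sets Lm = sets borel"
    and Lm_pm1: "emeasure Lm {-1, 1} = 0"
    and nn_integral_min_1_sq: "(\<integral>\<^sup>+ x. ennreal (min 1 (x\<^sup>2)) \<partial>Lm) < \<infinity>"
begin

lemma measurable_Lm: "f \<in> borel_measurable borel \<Longrightarrow> f \<in> borel_measurable Lm"
  using measurable_cong_sets[OF sets_Lm refl, of borel] by blast

lemma space_Lm: "space Lm = UNIV"
  using sets_eq_imp_space_eq[OF sets_Lm] by simp

lemma sets_borel_Lm: "A \<in> sets borel \<Longrightarrow> A \<in> sets Lm"
  using sets_Lm by simp

lemma integrable_dominated_min_1_sq: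
  fixes G :: "real \<Rightarrow> real"
  assumes "G \<in> borel_measurable borel" "\<And>x. \<bar>G x\<bar> \<le> C * min 1 (x\<^sup>2)"
  shows "integrable Lm G"
proof (rule Bochner_Integration.integrable_bound[of Lm "\<lambda>x. C * min 1 (x\<^sup>2)"])
  have "integrable Lm (\<lambda>x. min 1 (x\<^sup>2))"
    by (rule integrableI_bounded) (use nn_integral_min_1_sq in \<open>auto intro!: measurable_Lm\<close>)
  then show "integrable Lm (\<lambda>x. C * min 1 (x\<^sup>2))" by simp
  show "G \<in> borel_measurable Lm" using assms(1) by (rule measurable_Lm)
  have "C \<ge> 0" using assms(2)[of 1] by simp
  then show "AE x in Lm. norm (G x) \<le> norm (C * min 1 (x\<^sup>2))" using assms(2) by auto
qed

lemma integrable_vanishing_near_0: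
  fixes G :: "real \<Rightarrow> real"
  assumes "G \<in> borel_measurable borel" "\<And>x. \<bar>G x\<bar> \<le> C" "\<And>x. \<bar>x\<bar> < \<delta> \<Longrightarrow> G x = 0" "\<delta> > 0"
  shows "integrable Lm G"
proof (rule integrable_dominated_min_1_sq[OF assms(1), of "C / min 1 (\<delta>\<^sup>2)"])
  fix x
  have "C \<ge> 0" using assms(2)[of 0] by simp
  have m: "min 1 (\<delta>\<^sup>2) > 0" using assms(4) by simp
  show "\<bar>G x\<bar> \<le> C / min 1 (\<delta>\<^sup>2) * min 1 (x\<^sup>2)"
  proof (cases "\<bar>x\<bar> < \<delta>")
    case False
    then have "min 1 (\<delta>\<^sup>2) \<le> min 1 (x\<^sup>2)"
      using assms(4) by (simp add: abs_le_square_iff[symmetric] min.coboundedI2)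
    then have "C \<le> C / min 1 (\<delta>\<^sup>2) * min 1 (x\<^sup>2)"
      using m \<open>C \<ge> 0\<close> by (simp add: field_simps mult_left_mono)
    then show ?thesis using assms(2)[of x] by simp
  qed (use assms(3) \<open>C \<ge> 0\<close> m in simp)
qed

lemma fmeasurable_abs_ge:
  assumes "\<delta> > 0"
  shows "{x. \<delta> \<le> \<bar>x\<bar>} \<in> fmeasurable Lm"
proof -
  have "integrable Lm (indicator {x. \<delta> \<le> \<bar>x\<bar>} :: real \<Rightarrow> real)"
    by (rule integrable_vanishing_near_0[of _ 1 \<delta>]) (use assms in \<open>auto simp: indicator_def\<close>)
  then show ?thesis
    by (simp add: integrable_indicator_iff space_Lm fmeasurable_def)
qed

text \<open>Here \<open>\<Pi>({-1, 1}) = 0\<close> is used: the shells decrease to \<open>{-1, 1}\<close>.\<close>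

lemma measure_unit_shell_small:
  assumes "\<epsilon> > 0"
  shows "\<exists>\<tau>. 0 < \<tau> \<and> \<tau> \<le> 1/4 \<and> measure Lm (unit_shell \<tau>) < \<epsilon>"
proof -
  define A where "A m = unit_shell (1 / (real m + 4))" for m :: nat
  have A_sets: "A m \<in> sets Lm" for m unfolding A_def unit_shell_def
    by (intro sets_borel_Lm) measurable
  have small: "1 / (real m + 4) \<le> 1/4" for m :: nat by (simp add: field_simps)
  have A_far: "A m \<subseteq> {x. 1/2 \<le> \<bar>x\<bar>}" for m
  proof
    fix x assume "x \<in> A m"
    then have "1 - 1 / (real m + 4) < \<bar>x\<bar>" unfolding A_def unit_shell_def by auto
    then have "1/2 \<le> \<bar>x\<bar>" using small[of m] by linarith
    then show "x \<in> {x. 1/2 \<le> \<bar>x\<bar>}" by simp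
  qed
  have A_finite: "emeasure Lm (A m) \<noteq> \<infinity>" for m
    using fmeasurableI2[OF fmeasurable_abs_ge[of "1/2"] A_far[of m] A_sets[of m]]
    by (simp add: fmeasurable_def top.not_eq_extremum)
  have "decseq A"
  proof (rule decseq_SucI)
    fix m
    have "1 / (real (Suc m) + 4) \<le> 1 / (real m + 4)" by (simp add: frac_le)
    then show "A (Suc m) \<subseteq> A m" unfolding A_def unit_shell_def by auto
  qed
  moreover have "(\<Inter>m. A m) = {-1, 1}" unfolding A_def by (rule Inter_unit_shell)
  moreover have "(\<lambda>m. emeasure Lm (A m)) \<longlonglongrightarrow> emeasure Lm (\<Inter>m. A m)"
    using A_sets \<open>decseq A\<close> A_finite by (intro Lim_emeasure_decseq) auto
  ultimately have "(\<lambda>m. emeasure Lm (A m)) \<longlonglongrightarrow> 0" using Lm_pm1 by simp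
  moreover have "ennreal \<epsilon> > 0" using assms by simp
  ultimately have "\<forall>\<^sub>F m in sequentially. emeasure Lm (A m) < ennreal \<epsilon>"
    using order_tendstoD(2) by blast
  then obtain m where m: "emeasure Lm (A m) < ennreal \<epsilon>"
    by (auto simp: eventually_sequentially)
  then have "measure Lm (A m) < \<epsilon>"
    using A_finite[of m] assms by (simp add: measure_def enn2real_less_iff top.not_eq_extremum)
  then show ?thesis using small[of m] unfolding A_def by (intro exI[of _ "1 / (real m + 4)"]) auto
qed

end

text \<open>A continuous \<open>F\<close> on \<open>\<real>\<close> that is constant outside \<open>[-R, R]\<close> factors through
  \<open>x \<mapsto> e ^ x\<close> as a continuous function on \<open>[0, \<infinity>]\<close>: compose with \<open>ln\<close> after clipping to
  \<open>[e ^ -R, e ^ R]\<close>.\<close>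

definition log_clip :: "real \<Rightarrow> ereal \<Rightarrow> real" where
  "log_clip R u = ln (real_of_ereal (min (max u (ereal (exp (-R)))) (ereal (exp R))))"

lemma log_clip_exp: "R > 0 \<Longrightarrow> log_clip R (ereal (exp t)) = min (max t (-R)) R"
proof -
  assume "R > 0"
  have "mono (exp :: real \<Rightarrow> real)" by (rule monoI) simp
  then have "min (max (exp t) (exp (-R))) (exp R) = exp (min (max t (-R)) R)"
    by (simp add: max_of_mono min_of_mono)
  moreover have "min (max (ereal (exp t)) (ereal (exp (-R)))) (ereal (exp R))
      = ereal (min (max (exp t) (exp (-R))) (exp R))"
    by (simp add: min_def max_def)
  ultimately show ?thesis unfolding log_clip_def by simp
qed

lemma continuous_log_clip: "continuous_on UNIV (log_clip R)"
proof -
  let ?cl = "\<lambda>u. min (max u (ereal (exp (-R)))) (ereal (exp R))"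
  have "continuous_on UNIV ?cl" by (intro continuous_intros)
  moreover have "?cl ` UNIV \<subseteq> UNIV - {\<infinity>, -\<infinity>}" by (auto simp: min_def max_def)
  ultimately have "continuous_on UNIV (\<lambda>u. real_of_ereal (?cl u))"
    by (rule continuous_on_compose2[OF continuous_on_real])
  moreover have "real_of_ereal (?cl u) > 0" for u
  proof (cases u)
    case (real r)
    then show ?thesis by (simp add: min_def max_def) (smt (verit) exp_gt_zero)
  qed (auto simp: min_def max_def)
  ultimately show ?thesis
    unfolding log_clip_def by (intro continuous_on_ln) (auto simp: less_imp_neq[symmetric])
qed

lemma abs_log_clip_less:
  assumes "R > 0" "\<delta> > 0" "u \<in> {0..\<infinity>}" "\<bar>u - 1\<bar> < ereal (1 - exp (-\<delta>))"
  shows "\<bar>log_clip R u\<bar> < \<delta>"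
proof -
  obtain t where u: "u = ereal t" using assms(3,4) by (cases u) auto
  have "\<bar>t - 1\<bar> < 1 - exp (-\<delta>)" using assms(4) u by (simp add: one_ereal_def)
  moreover have "2 \<le> exp \<delta> + exp (-\<delta>)"
    using exp_ge_add_one_self[of \<delta>] exp_ge_add_one_self[of "-\<delta>"] by linarith
  ultimately have t: "exp (-\<delta>) < t" "t < exp \<delta>" by auto
  have "t > 0" using t(1) exp_gt_zero[of "-\<delta>"] by linarith
  have "-\<delta> < ln t" using ln_less_cancel_iff[of "exp (-\<delta>)" t] t(1) \<open>t > 0\<close> by simp
  moreover have "ln t < \<delta>" using ln_less_cancel_iff[of t "exp \<delta>"] t(2) \<open>t > 0\<close> by simp
  moreover have "log_clip R u = min (max (ln t) (-R)) R"
    using log_clip_exp[OF assms(1), of "ln t"] \<open>t > 0\<close> u by simp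
  ultimately show ?thesis using assms(1,2) by (simp add: min_def max_def abs_less_iff)
qed

lemma tendsto_Pistar_int_A1:
  fixes F :: "real \<Rightarrow> real" and p :: "nat \<Rightarrow> nat \<Rightarrow> real" and a :: "nat \<Rightarrow> real"
  assumes A1: "\<And>f :: ereal \<Rightarrow> real. continuous_on {0..\<infinity>} f \<Longrightarrow>
          (\<exists>\<delta>>0. \<forall>y\<in>{0..\<infinity>}. \<bar>y - 1\<bar> < ereal \<delta> \<longrightarrow> f y = 0) \<Longrightarrow>
          ((\<lambda>n. a n * (\<Sum>k. p n (Suc k) * f (ereal (real (Suc k) / real n))))
             \<longlongrightarrow> (\<integral>x. f (ereal (exp x)) \<partial>Lm)) sequentially"
    and "continuous_on UNIV F" "R > 0" "\<delta> > 0"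
    and F_0: "\<And>x. \<bar>x\<bar> < \<delta> \<Longrightarrow> F x = 0"
    and F_left: "\<And>x. x \<le> -R \<Longrightarrow> F x = F (-R)"
    and F_right: "\<And>x. x \<ge> R \<Longrightarrow> F x = F R"
  shows "(\<lambda>n. a n * Pistar_int p n F) \<longlonglongrightarrow> (\<integral>x. F x \<partial>Lm)"
proof -
  define f where "f u = F (log_clip R u)" for u
  have F_clip: "F (min (max t (-R)) R) = F t" for t
    using F_left[of t] F_right[of t] \<open>R > 0\<close>
      by (cases "t \<le> -R"; cases "t \<ge> R") (auto simp: min_def max_def)
  have f_exp: "f (ereal (exp t)) = F t" for t
    unfolding f_def log_clip_exp[OF \<open>R > 0\<close>] F_clip ..
  have "continuous_on {0..\<infinity>} f"
    unfolding f_def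
    by (rule continuous_on_subset[OF continuous_on_compose2[OF \<open>continuous_on UNIV F\<close> continuous_log_clip]]) auto
  moreover have "\<exists>\<delta>>0. \<forall>y\<in>{0..\<infinity>}. \<bar>y - 1\<bar> < ereal \<delta> \<longrightarrow> f y = 0"
    using \<open>\<delta> > 0\<close> abs_log_clip_less[OF \<open>R > 0\<close> \<open>\<delta> > 0\<close>] F_0
    by (intro exI[of _ "1 - exp (-\<delta>)"]) (auto simp: f_def)
  ultimately have lim: "(\<lambda>n. a n * (\<Sum>k. p n (Suc k) * f (ereal (real (Suc k) / real n))))
      \<longlonglongrightarrow> (\<integral>x. F x \<partial>Lm)"
    using A1[of f] by (simp add: f_exp)
  have "f (ereal (real (Suc k) / real n)) = F (ln (real (Suc k)) - ln (real n))" if "n \<ge> 1" for n k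
    using f_exp[of "ln (real (Suc k)) - ln (real n)"] that by (simp add: exp_diff)
  then have "\<forall>\<^sub>F n in sequentially.
      a n * (\<Sum>k. p n (Suc k) * f (ereal (real (Suc k) / real n))) = a n * Pistar_int p n F"
    unfolding Pistar_int_def by (intro eventually_sequentiallyI[of 1]) simp
  then show ?thesis by (rule Lim_transform_eventually[OF lim])
qed

section \<open>Test functions\<close>

text \<open>The key inequality below bounds \<open>e ^ (b y) - 1\<close> by a combination of \<open>y 1[-1,1](y)\<close> and
  \<open>y\<^sup>2 1[-1,1](y)\<close>, whose \<open>\<Pi>\<^sup>*\<close>-integrals are controlled by (A2), of the tail \<open>e ^ (\<beta> y) 1(1,\<infinity>)(y)\<close>,
  controlled by (A3), and of two test functions to which (A1) applies: continuous, vanishing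
  near \<open>0\<close> and constant near \<open>\<plusminus>\<infinity>\<close>. The \<open>bump\<close> localises the second order Taylor bound
  near \<open>0\<close>; \<open>trunc_id\<close> is a continuous minorant of \<open>y 1[-1,1](y)\<close> that differs from it only on
  the \<open>unit_shell\<close>; clipping at \<open>-R\<close> and \<open>right_cutoff\<close> make the far part constant left of
  \<open>-R\<close> and zero right of \<open>L + 1\<close>.\<close>

definition bump :: "real \<Rightarrow> real \<Rightarrow> real" where
  "bump \<delta> y = max 0 (min 1 (2 - \<bar>y\<bar> / \<delta>))"

definition inner_cutoff :: "real \<Rightarrow> real \<Rightarrow> real" where
  "inner_cutoff \<tau> y = max 0 (min 1 ((1 - \<bar>y\<bar>) / \<tau>))"

definition outer_cutoff :: "real \<Rightarrow> real \<Rightarrow> real" where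
  "outer_cutoff \<tau> y = max 0 (min 1 ((1 + \<tau> - \<bar>y\<bar>) / \<tau>))"

definition trunc_id :: "real \<Rightarrow> real \<Rightarrow> real" where
  "trunc_id \<tau> y = min (y * inner_cutoff \<tau> y) (y * outer_cutoff \<tau> y)"

definition right_cutoff :: "real \<Rightarrow> real \<Rightarrow> real" where
  "right_cutoff L y = max 0 (min 1 (L + 1 - y))"

definition levy_integrand :: "real \<Rightarrow> real \<Rightarrow> real" where
  "levy_integrand b y = exp (b * y) - 1 - b * y * indicator {-1..1} y"

definition clipped_integrand :: "real \<Rightarrow> real \<Rightarrow> real \<Rightarrow> real \<Rightarrow> real" where
  "clipped_integrand b \<tau> R y = max (exp (b * y)) (exp (- b * R)) - 1 - b * trunc_id \<tau> y"

definition far_test :: "real \<Rightarrow> real \<Rightarrow> real \<Rightarrow> real \<Rightarrow> real \<Rightarrow> real \<Rightarrow> real" where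
  "far_test b \<delta> \<tau> R L y = (1 - bump \<delta> y) * clipped_integrand b \<tau> R y * right_cutoff L y"

definition near_test :: "real \<Rightarrow> real \<Rightarrow> real \<Rightarrow> real" where
  "near_test \<delta> \<tau> y = y\<^sup>2 * (inner_cutoff \<tau> y - bump \<delta> y)"

definition C_up :: "real \<Rightarrow> real \<Rightarrow> real" where
  "C_up b \<delta> = b\<^sup>2 * exp (2 * b * \<delta>) / 2"

definition C_lo :: "real \<Rightarrow> real \<Rightarrow> real" where
  "C_lo b \<delta> = b\<^sup>2 * exp (- (2 * b * \<delta>)) / 2"

lemma exp_minus_one_minus_le:
  fixes x :: real
  shows "exp x - 1 - x \<le> x\<^sup>2 / 2 * exp \<bar>x\<bar>"
proof -
  obtain t where t: "\<bar>t\<bar> \<le> \<bar>x\<bar>" and e: "exp x = (\<Sum>m<2. x ^ m / fact m) + exp t / fact 2 * x ^ 2"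
    using Maclaurin_exp_le[of x 2] by blast
  have "exp t \<le> exp \<bar>x\<bar>" using t by simp
  then have "exp t / 2 * x\<^sup>2 \<le> exp \<bar>x\<bar> / 2 * x\<^sup>2" by (intro mult_right_mono) auto
  then show ?thesis using e by (simp add: numeral_2_eq_2 algebra_simps)
qed

lemma exp_minus_one_minus_ge:
  fixes x :: real
  shows "x\<^sup>2 / 2 * exp (- \<bar>x\<bar>) \<le> exp x - 1 - x"
proof -
  obtain t where t: "\<bar>t\<bar> \<le> \<bar>x\<bar>" and e: "exp x = (\<Sum>m<2. x ^ m / fact m) + exp t / fact 2 * x ^ 2"
    using Maclaurin_exp_le[of x 2] by blast
  have "exp (- \<bar>x\<bar>) \<le> exp t" using t by simp
  then have "exp (- \<bar>x\<bar>) / 2 * x\<^sup>2 \<le> exp t / 2 * x\<^sup>2" by (intro mult_right_mono) auto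
  then show ?thesis using e by (simp add: numeral_2_eq_2 algebra_simps)
qed

locale cutoffs =
  fixes b \<delta> \<tau> R L :: real
  assumes b: "b > 0" and \<delta>: "0 < \<delta>" "\<delta> \<le> 1/8" and \<tau>: "0 < \<tau>" "\<tau> \<le> 1/4"
    and R: "R \<ge> 2" and L: "L \<ge> 2"
begin

lemma bump_bounds: "0 \<le> bump \<delta> y \<and> bump \<delta> y \<le> 1" unfolding bump_def by auto
lemma inner_cutoff_bounds: "0 \<le> inner_cutoff \<tau> y \<and> inner_cutoff \<tau> y \<le> 1"
  unfolding inner_cutoff_def by auto
lemma outer_cutoff_bounds: "0 \<le> outer_cutoff \<tau> y \<and> outer_cutoff \<tau> y \<le> 1"
  unfolding outer_cutoff_def by auto
lemma right_cutoff_bounds: "0 \<le> right_cutoff L y \<and> right_cutoff L y \<le> 1"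
  unfolding right_cutoff_def by auto

lemma bump_eq_1: "\<bar>y\<bar> \<le> \<delta> \<Longrightarrow> bump \<delta> y = 1"
proof -
  assume "\<bar>y\<bar> \<le> \<delta>"
  then have "\<bar>y\<bar> / \<delta> \<le> 1" using \<delta> by simp
  then show ?thesis unfolding bump_def by simp
qed

lemma bump_eq_0: "\<bar>y\<bar> \<ge> 2 * \<delta> \<Longrightarrow> bump \<delta> y = 0"
proof -
  assume "\<bar>y\<bar> \<ge> 2 * \<delta>"
  then have "\<bar>y\<bar> / \<delta> \<ge> 2" using \<delta> by (simp add: le_divide_eq)
  then show ?thesis unfolding bump_def by simp
qed

lemma inner_cutoff_eq_1: "\<bar>y\<bar> \<le> 1 - \<tau> \<Longrightarrow> inner_cutoff \<tau> y = 1"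
proof -
  assume "\<bar>y\<bar> \<le> 1 - \<tau>"
  then have "(1 - \<bar>y\<bar>) / \<tau> \<ge> 1" using \<tau> by (simp add: le_divide_eq)
  then show ?thesis unfolding inner_cutoff_def by simp
qed

lemma inner_cutoff_eq_0: "\<bar>y\<bar> \<ge> 1 \<Longrightarrow> inner_cutoff \<tau> y = 0"
proof -
  assume "\<bar>y\<bar> \<ge> 1"
  then have "(1 - \<bar>y\<bar>) / \<tau> \<le> 0" using \<tau> by (simp add: divide_le_0_iff)
  then show ?thesis unfolding inner_cutoff_def by simp
qed

lemma outer_cutoff_eq_1: "\<bar>y\<bar> \<le> 1 \<Longrightarrow> outer_cutoff \<tau> y = 1"
proof -
  assume "\<bar>y\<bar> \<le> 1"
  then have "(1 + \<tau> - \<bar>y\<bar>) / \<tau> \<ge> 1" using \<tau> by (simp add: le_divide_eq)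
  then show ?thesis unfolding outer_cutoff_def by simp
qed

lemma outer_cutoff_eq_0: "\<bar>y\<bar> \<ge> 1 + \<tau> \<Longrightarrow> outer_cutoff \<tau> y = 0"
proof -
  assume "\<bar>y\<bar> \<ge> 1 + \<tau>"
  then have "(1 + \<tau> - \<bar>y\<bar>) / \<tau> \<le> 0" using \<tau> by (simp add: divide_le_0_iff)
  then show ?thesis unfolding outer_cutoff_def by simp
qed

lemma inner_cutoff_le_outer_cutoff: "inner_cutoff \<tau> y \<le> outer_cutoff \<tau> y"
proof -
  have "(1 - \<bar>y\<bar>) / \<tau> \<le> (1 + \<tau> - \<bar>y\<bar>) / \<tau>" using \<tau> by (intro divide_right_mono) auto
  then show ?thesis unfolding inner_cutoff_def outer_cutoff_def
    by (rule max.mono[OF order.refl min.mono[OF order.refl]])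
qed

lemma trunc_id_of_nonneg: "y \<ge> 0 \<Longrightarrow> trunc_id \<tau> y = y * inner_cutoff \<tau> y"
  unfolding trunc_id_def using inner_cutoff_le_outer_cutoff[of y]
    by (simp add: mult_left_mono min_absorb1)

lemma trunc_id_of_nonpos: "y \<le> 0 \<Longrightarrow> trunc_id \<tau> y = y * outer_cutoff \<tau> y"
  unfolding trunc_id_def using inner_cutoff_le_outer_cutoff[of y]
    by (simp add: mult_left_mono_neg min_absorb2)

lemma trunc_id_eq_id: "\<bar>y\<bar> \<le> 1 - \<tau> \<Longrightarrow> trunc_id \<tau> y = y"
  using inner_cutoff_eq_1[of y] outer_cutoff_eq_1[of y] \<tau> unfolding trunc_id_def by simp

lemma trunc_id_eq_0: "\<bar>y\<bar> \<ge> 1 + \<tau> \<Longrightarrow> trunc_id \<tau> y = 0"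
  using inner_cutoff_eq_0[of y] outer_cutoff_eq_0[of y] \<tau> unfolding trunc_id_def by simp

lemma trunc_id_le: "trunc_id \<tau> y \<le> y * indicator {-1..1} y"
proof (cases "y \<ge> 0")
  case True
  then show ?thesis
    using trunc_id_of_nonneg[OF True] inner_cutoff_bounds[of y] inner_cutoff_eq_0[of y]
    by (cases "y \<le> 1") (auto simp: indicator_def mult_left_le)
next
  case False
  then show ?thesis
    using trunc_id_of_nonpos[of y] outer_cutoff_bounds[of y] outer_cutoff_eq_1[of y]
    by (cases "y \<ge> -1") (auto simp: indicator_def mult_nonpos_nonneg)
qed

lemma trunc_id_error: "y * indicator {-1..1} y - trunc_id \<tau> y \<le> 2 * indicator (unit_shell \<tau>) y"
proof (cases "\<bar>y\<bar> \<le> 1 - \<tau>")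
  case True
  have "indicator {-1..1} y = (1::real)" using True \<tau> by (simp add: indicator_def abs_le_iff)
  then show ?thesis using trunc_id_eq_id[OF True] \<tau> by (simp add: indicator_def)
next
  case False
  show ?thesis
  proof (cases "\<bar>y\<bar> \<ge> 1 + \<tau>")
    case True
    have "indicator {-1..1} y = (0::real)" using True \<tau> by (auto simp: indicator_def abs_le_iff)
    then show ?thesis using trunc_id_eq_0[OF True] by simp
  next
    case False
    then have D: "y \<in> unit_shell \<tau>" using \<open>\<not> \<bar>y\<bar> \<le> 1 - \<tau>\<close> unfolding unit_shell_def by auto
    have "y * indicator {-1..1} y - trunc_id \<tau> y \<le> 2"
    proof (cases "y \<ge> 0")
      case True
      have "trunc_id \<tau> y \<ge> 0" using trunc_id_of_nonneg[OF True] inner_cutoff_bounds[of y] True by simp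
      moreover have "y * indicator {-1..1} y \<le> 1" by (auto simp: indicator_def)
      ultimately show ?thesis by simp
    next
      case False
      have "trunc_id \<tau> y \<ge> y" using trunc_id_of_nonpos[of y] False outer_cutoff_bounds[of y]
        by (simp add: mult_left_le_one_le mult_le_cancel_left1)
      moreover have "y * indicator {-1..1} y \<le> 0" using False by (auto simp: indicator_def)
      moreover have "- y \<le> 2" using D \<tau> unfolding unit_shell_def by auto
      ultimately show ?thesis by simp
    qed
    then show ?thesis using D by simp
  qed
qed

lemma abs_trunc_id_le: "\<bar>trunc_id \<tau> y\<bar> \<le> 2"
proof (cases "\<bar>y\<bar> \<ge> 1 + \<tau>")
  case True then show ?thesis using trunc_id_eq_0 by simp
next
  case False
  then have y2: "\<bar>y\<bar> \<le> 2" using \<tau> by simp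
  have "\<bar>y * inner_cutoff \<tau> y\<bar> \<le> 2" using y2 inner_cutoff_bounds[of y]
    by (simp add: abs_mult mult_le_one order_trans[OF mult_right_le_one_le])
  moreover have "\<bar>y * outer_cutoff \<tau> y\<bar> \<le> 2" using y2 outer_cutoff_bounds[of y]
    by (simp add: abs_mult order_trans[OF mult_right_le_one_le])
  ultimately show ?thesis unfolding trunc_id_def by linarith
qed

lemma bump_neq_0D: "bump \<delta> y \<noteq> 0 \<Longrightarrow> indicator {-1..1} y = (1::real) \<and> \<bar>y\<bar> < 2 * \<delta>"
proof -
  assume "bump \<delta> y \<noteq> 0"
  then have "\<bar>y\<bar> < 2 * \<delta>" using bump_eq_0[of y] by force
  then show ?thesis using \<delta> by (auto simp: indicator_def abs_less_iff)
qed

lemma integrand_bump_le: "levy_integrand b y * bump \<delta> y \<le> C_up b \<delta> * (y\<^sup>2 * bump \<delta> y)"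
proof (cases "bump \<delta> y = 0")
  case True then show ?thesis by simp
next
  case False
  from bump_neq_0D[OF False] have I: "indicator {-1..1} y = (1::real)" and y: "\<bar>y\<bar> < 2 * \<delta>" by auto
  have "levy_integrand b y = exp (b*y) - 1 - b*y" unfolding levy_integrand_def I by simp
  also have "\<dots> \<le> (b*y)\<^sup>2 / 2 * exp \<bar>b*y\<bar>" by (rule exp_minus_one_minus_le)
  also have "\<dots> \<le> C_up b \<delta> * y\<^sup>2"
  proof -
    have "\<bar>b*y\<bar> \<le> 2 * b * \<delta>" using y b by (simp add: abs_mult)
    then have "exp \<bar>b*y\<bar> \<le> exp (2 * b * \<delta>)" by simp
    then have "(b*y)\<^sup>2 / 2 * exp \<bar>b*y\<bar> \<le> (b*y)\<^sup>2 / 2 * exp (2 * b * \<delta>)"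
      by (intro mult_left_mono) auto
    then show ?thesis unfolding C_up_def by (simp add: power_mult_distrib algebra_simps)
  qed
  finally show ?thesis using bump_bounds[of y] by (simp add: mult_right_mono mult.assoc[symmetric])
qed

lemma integrand_bump_ge: "C_lo b \<delta> * (y\<^sup>2 * bump \<delta> y) \<le> levy_integrand b y * bump \<delta> y"
proof (cases "bump \<delta> y = 0")
  case True then show ?thesis by simp
next
  case False
  from bump_neq_0D[OF False] have I: "indicator {-1..1} y = (1::real)" and y: "\<bar>y\<bar> < 2 * \<delta>" by auto
  have "C_lo b \<delta> * y\<^sup>2 \<le> (b*y)\<^sup>2 / 2 * exp (- \<bar>b*y\<bar>)"
  proof -
    have "\<bar>b*y\<bar> \<le> 2 * b * \<delta>" using y b by (simp add: abs_mult)
    then have "exp (- (2 * b * \<delta>)) \<le> exp (- \<bar>b*y\<bar>)" by simp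
    then have "(b*y)\<^sup>2 / 2 * exp (- (2 * b * \<delta>)) \<le> (b*y)\<^sup>2 / 2 * exp (- \<bar>b*y\<bar>)"
      by (intro mult_left_mono) auto
    then show ?thesis unfolding C_lo_def by (simp add: power_mult_distrib algebra_simps)
  qed
  also have "\<dots> \<le> exp (b*y) - 1 - b*y" by (rule exp_minus_one_minus_ge)
  also have "\<dots> = levy_integrand b y" unfolding levy_integrand_def I by simp
  finally show ?thesis using bump_bounds[of y] by (simp add: mult_right_mono mult.assoc[symmetric])
qed

lemma near_test_eq_0_small: "\<bar>y\<bar> < \<delta> \<Longrightarrow> near_test \<delta> \<tau> y = 0"
  using bump_eq_1[of y] inner_cutoff_eq_1[of y] \<delta> \<tau> unfolding near_test_def by simp

lemma near_test_eq_0_large: "\<bar>y\<bar> \<ge> 1 \<Longrightarrow> near_test \<delta> \<tau> y = 0"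
  using bump_eq_0[of y] inner_cutoff_eq_0[of y] \<delta> unfolding near_test_def by simp

lemma abs_near_test_le: "\<bar>near_test \<delta> \<tau> y\<bar> \<le> 1"
proof (cases "\<bar>y\<bar> \<ge> 1")
  case True then show ?thesis using near_test_eq_0_large by simp
next
  case False
  then have "y\<^sup>2 \<le> 1" by (simp add: abs_square_le_1)
  moreover have "\<bar>inner_cutoff \<tau> y - bump \<delta> y\<bar> \<le> 1"
    using inner_cutoff_bounds[of y] bump_bounds[of y] by linarith
  ultimately show ?thesis unfolding near_test_def by (simp add: abs_mult mult_le_one)
qed

lemma sq_bump_eq:
  "y\<^sup>2 * bump \<delta> y
    = y\<^sup>2 * indicator {-1..1} y - near_test \<delta> \<tau> y - y\<^sup>2 * (indicator {-1..1} y - inner_cutoff \<tau> y)"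
  unfolding near_test_def by (simp add: algebra_simps)

lemma sq_indicator_inner_cutoff_bounds:
  "0 \<le> y\<^sup>2 * (indicator {-1..1} y - inner_cutoff \<tau> y) \<and>
    y\<^sup>2 * (indicator {-1..1} y - inner_cutoff \<tau> y) \<le> indicator (unit_shell \<tau>) y"
proof (cases "\<bar>y\<bar> \<le> 1 - \<tau>")
  case True
  have "indicator {-1..1} y = (1::real)" using True \<tau> by (auto simp: indicator_def abs_le_iff)
  then show ?thesis using inner_cutoff_eq_1[OF True] by (simp add: indicator_def)
next
  case False
  show ?thesis
  proof (cases "\<bar>y\<bar> > 1")
    case True
    have "indicator {-1..1} y = (0::real)" using True by (auto simp: indicator_def abs_le_iff)
    then show ?thesis using inner_cutoff_eq_0[of y] True by simp
  next
    case False
    then have D: "y \<in> unit_shell \<tau>"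
      using \<open>\<not> \<bar>y\<bar> \<le> 1 - \<tau>\<close> \<tau> unfolding unit_shell_def by auto
    have I: "indicator {-1..1} y = (1::real)" using False by (auto simp: indicator_def abs_le_iff)
    have "y\<^sup>2 \<le> 1" using False by (simp add: abs_square_le_1)
    moreover have "0 \<le> 1 - inner_cutoff \<tau> y \<and> 1 - inner_cutoff \<tau> y \<le> 1"
      using inner_cutoff_bounds[of y] by simp
    ultimately show ?thesis using D I by (simp add: mult_le_one)
  qed
qed

lemma integrand_le_clipped_integrand: "levy_integrand b y \<le> clipped_integrand b \<tau> R y"
proof -
  have "exp (b*y) \<le> max (exp (b * y)) (exp (- b * R))" by simp
  moreover have "b * trunc_id \<tau> y \<le> b * (y * indicator {-1..1} y)" using trunc_id_le[of y] b
    by (simp add: mult_left_mono)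
  ultimately show ?thesis unfolding levy_integrand_def clipped_integrand_def
    by (simp add: algebra_simps)
qed

lemma clipped_integrand_minus_integrand:
  "clipped_integrand b \<tau> R y - levy_integrand b y
    \<le> exp (- b * R) * indicator {..-R} y + 2 * b * indicator (unit_shell \<tau>) y"
proof -
  have m: "max (exp (b * y)) (exp (- b * R)) - exp (b*y) \<le> exp (- b * R) * indicator {..-R} y"
  proof (cases "y \<le> -R")
    case True
    then show ?thesis by (simp add: indicator_def max_def)
  next
    case False
    then have "-R \<le> y" by simp
    then have "b * (-R) \<le> b * y" using b by (intro mult_left_mono) auto
    then have "- b * R \<le> b * y" by simp
    then show ?thesis using False by (simp add: indicator_def max_def)
  qed
  have p: "b * (y * indicator {-1..1} y - trunc_id \<tau> y) \<le> 2 * b * indicator (unit_shell \<tau>) y"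
    using trunc_id_error[of y] b by (simp add: mult_left_mono mult.assoc)
  have "clipped_integrand b \<tau> R y - levy_integrand b y
      = (max (exp (b * y)) (exp (- b * R)) - exp (b*y)) + b * (y * indicator {-1..1} y - trunc_id \<tau> y)"
    unfolding levy_integrand_def clipped_integrand_def by (simp add: algebra_simps)
  then show ?thesis using m p by linarith
qed

lemma far_test_eq_0_small: "\<bar>y\<bar> < \<delta> \<Longrightarrow> far_test b \<delta> \<tau> R L y = 0"
  using bump_eq_1[of y] unfolding far_test_def by simp

lemma far_test_eq_0_right: "y \<ge> L + 1 \<Longrightarrow> far_test b \<delta> \<tau> R L y = 0"
  unfolding far_test_def right_cutoff_def by simp

lemma far_test_left: "y \<le> -R \<Longrightarrow> far_test b \<delta> \<tau> R L y = exp (- b * R) - 1"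
proof -
  assume y: "y \<le> -R"
  have "bump \<delta> y = 0" using y R \<delta> by (intro bump_eq_0) auto
  moreover have "trunc_id \<tau> y = 0" using y R \<tau> by (intro trunc_id_eq_0) auto
  moreover have "right_cutoff L y = 1" using y R L unfolding right_cutoff_def by auto
  moreover have "exp (b * y) \<le> exp (- b * R)"
  proof -
    have "b * y \<le> b * (-R)" using y b by (intro mult_left_mono) auto
    then show ?thesis by simp
  qed
  ultimately show ?thesis unfolding far_test_def clipped_integrand_def by (simp add: max_def)
qed

lemma abs_far_test_le: "\<bar>far_test b \<delta> \<tau> R L y\<bar> \<le> exp (b * (L + 1)) + 2 + 2 * b"
proof (cases "y \<ge> L + 1")
  case True then show ?thesis using far_test_eq_0_right[OF True] b by (simp add: add_nonneg_nonneg)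
next
  case False
  have e1: "exp (b * y) \<le> exp (b * (L + 1))" using False b by (simp add: mult_left_mono)
  have e2: "exp (- b * R) \<le> 1" using b R by simp
  have e3: "exp (b * (L + 1)) \<ge> 1" using b L by simp
  have "\<bar>max (exp (b * y)) (exp (- b * R))\<bar> \<le> exp (b * (L + 1))" using e1 e2 e3
    by (simp add: max_def)
  moreover have "\<bar>b * trunc_id \<tau> y\<bar> \<le> 2 * b" using abs_trunc_id_le[of y] b
    by (simp add: abs_mult mult_left_mono mult.commute)
  ultimately have G: "\<bar>clipped_integrand b \<tau> R y\<bar> \<le> exp (b * (L + 1)) + 2 + 2 * b"
    unfolding clipped_integrand_def by linarith
  have "\<bar>(1 - bump \<delta> y) * right_cutoff L y\<bar> \<le> 1" using bump_bounds[of y] right_cutoff_bounds[of y]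
    by (simp add: abs_mult mult_le_one)
  then have "\<bar>(1 - bump \<delta> y) * right_cutoff L y\<bar> * \<bar>clipped_integrand b \<tau> R y\<bar>
      \<le> 1 * (exp (b * (L + 1)) + 2 + 2 * b)"
    using G by (intro mult_mono) auto
  moreover have "far_test b \<delta> \<tau> R L y
      = ((1 - bump \<delta> y) * right_cutoff L y) * clipped_integrand b \<tau> R y"
    unfolding far_test_def by (simp add: mult_ac)
  ultimately show ?thesis by (simp add: abs_mult)
qed

lemma continuous_far_test: "continuous_on UNIV (far_test b \<delta> \<tau> R L)"
  unfolding far_test_def clipped_integrand_def trunc_id_def bump_def right_cutoff_def
    inner_cutoff_def outer_cutoff_def
  by (intro continuous_intros) (use \<delta> \<tau> in auto)

lemma continuous_near_test: "continuous_on UNIV (near_test \<delta> \<tau>)"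
  unfolding near_test_def bump_def inner_cutoff_def by (intro continuous_intros) (use \<delta> \<tau> in auto)

lemma C_up_nonneg: "C_up b \<delta> \<ge> 0" unfolding C_up_def by simp

lemma clipped_integrand_co_bump_le:
  assumes "\<beta> > b"
  shows "clipped_integrand b \<tau> R y * (1 - bump \<delta> y)
    \<le> far_test b \<delta> \<tau> R L y + exp (-(\<beta> - b) * L) * (exp (\<beta> * y) * indicator {1<..} y)"
proof (cases "y \<le> L")
  case True
  then show ?thesis unfolding far_test_def right_cutoff_def by simp
next
  case False
  then have "y \<ge> 2" using L by simp
  then have "bump \<delta> y = 0" "trunc_id \<tau> y = 0" "exp (b * y) \<ge> 1" "exp (- b * R) \<le> 1"
    using \<delta> \<tau> b R by (auto intro: bump_eq_0 trunc_id_eq_0)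
  then have G: "clipped_integrand b \<tau> R y = exp (b * y) - 1"
    and G_nonneg: "clipped_integrand b \<tau> R y \<ge> 0"
    unfolding clipped_integrand_def by (simp_all add: max_def)
  have "clipped_integrand b \<tau> R y * (1 - bump \<delta> y)
      = far_test b \<delta> \<tau> R L y + clipped_integrand b \<tau> R y * (1 - right_cutoff L y)"
    unfolding far_test_def \<open>bump \<delta> y = 0\<close> by (simp add: algebra_simps)
  also have "clipped_integrand b \<tau> R y * (1 - right_cutoff L y) \<le> exp (b * y)"
    using mult_left_mono[of "1 - right_cutoff L y" 1, OF _ G_nonneg] right_cutoff_bounds[of y] G
    by simp
  also have "exp (b * y) \<le> exp (-(\<beta> - b) * L) * exp (\<beta> * y)"
    using mult_left_mono[of L y "\<beta> - b"] False \<open>\<beta> > b\<close>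
    by (simp add: exp_add[symmetric] algebra_simps)
  finally show ?thesis using \<open>y \<ge> 2\<close> by simp
qed

text \<open>Near \<open>0\<close> the Taylor bound \<open>e ^ (b y) - 1 - b y \<le> C_up b \<delta> y\<^sup>2\<close>
  is used, away from \<open>0\<close> the integrand is bounded by its clipped version.\<close>

lemma exp_minus_one_le_tests:
  assumes "\<beta> > b"
  shows "exp (b * y) - 1 \<le> b * (y * indicator {-1..1} y)
      + C_up b \<delta> * (y\<^sup>2 * indicator {-1..1} y - near_test \<delta> \<tau> y) + far_test b \<delta> \<tau> R L y
      + exp (-(\<beta> - b) * L) * (exp (\<beta> * y) * indicator {1<..} y)"
proof -
  have "exp (b * y) - 1 = b * (y * indicator {-1..1} y) + levy_integrand b y * bump \<delta> y
      + levy_integrand b y * (1 - bump \<delta> y)"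
    unfolding levy_integrand_def by (simp add: algebra_simps)
  moreover have "levy_integrand b y * bump \<delta> y \<le> C_up b \<delta> * (y\<^sup>2 * indicator {-1..1} y - near_test \<delta> \<tau> y)"
  proof -
    have "y\<^sup>2 * bump \<delta> y \<le> y\<^sup>2 * indicator {-1..1} y - near_test \<delta> \<tau> y"
      using sq_bump_eq[of y] sq_indicator_inner_cutoff_bounds[of y] by linarith
    then show ?thesis using integrand_bump_le[of y] mult_left_mono[OF _ C_up_nonneg] by fastforce
  qed
  moreover have "levy_integrand b y * (1 - bump \<delta> y) \<le> clipped_integrand b \<tau> R y * (1 - bump \<delta> y)"
    using integrand_le_clipped_integrand[of y] bump_bounds[of y] by (intro mult_right_mono) auto
  ultimately show ?thesis using clipped_integrand_co_bump_le[OF assms, of y] by linarith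
qed

end

locale cutoffs_levy = cutoffs b \<delta> \<tau> R L + levy_measure Lm
  for b \<delta> \<tau> R L :: real and Lm :: "real measure" +
  assumes integrable_levy_integrand: "integrable Lm (levy_integrand b)"
begin

lemma measurable_unit_indicator: "(indicator {-1..1} :: real \<Rightarrow> real) \<in> borel_measurable borel"
  by measurable

lemma measurable_levy_integrand: "levy_integrand b \<in> borel_measurable borel"
  unfolding levy_integrand_def using measurable_unit_indicator by measurable

lemma continuous_bump: "continuous_on UNIV (bump \<delta>)" unfolding bump_def
  by (intro continuous_intros) (use \<delta> in auto)

lemma measurable_bump: "bump \<delta> \<in> borel_measurable borel"
  by (rule borel_measurable_continuous_onI[OF continuous_bump])

lemma continuous_inner_cutoff: "continuous_on UNIV (inner_cutoff \<tau>)" unfolding inner_cutoff_def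
  by (intro continuous_intros) (use \<tau> in auto)

lemma measurable_inner_cutoff: "inner_cutoff \<tau> \<in> borel_measurable borel"
  by (rule borel_measurable_continuous_onI[OF continuous_inner_cutoff])

lemma measurable_near_test: "near_test \<delta> \<tau> \<in> borel_measurable borel"
  by (rule borel_measurable_continuous_onI[OF continuous_near_test])

lemma measurable_far_test: "far_test b \<delta> \<tau> R L \<in> borel_measurable borel"
  by (rule borel_measurable_continuous_onI[OF continuous_far_test])

lemma integrable_near_test: "integrable Lm (near_test \<delta> \<tau>)"
  by (rule integrable_vanishing_near_0[OF measurable_near_test abs_near_test_le near_test_eq_0_small \<delta>(1)])

lemma integrable_far_test: "integrable Lm (far_test b \<delta> \<tau> R L)"
  by (rule integrable_vanishing_near_0[OF measurable_far_test abs_far_test_le far_test_eq_0_small \<delta>(1)])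

lemma abs_sq_indicator_le: "\<bar>x\<^sup>2 * indicator {-1..1} x\<bar> \<le> 1 * min 1 ((x::real)\<^sup>2)"
  by (cases "x \<in> {-1..1}") (auto simp: abs_square_le_1 abs_le_iff)

lemma integrable_sq_indicator: "integrable Lm (\<lambda>x. x\<^sup>2 * indicator {-1..1} x)"
  by (rule integrable_dominated_min_1_sq[OF _ abs_sq_indicator_le]) (use measurable_unit_indicator in measurable)

lemma sq_bump_le: "x\<^sup>2 * bump \<delta> x \<le> x\<^sup>2 * indicator {-1..1} x"
proof (cases "bump \<delta> x = 0")
  case True then show ?thesis by (simp add: indicator_def)
next
  case False
  then have "indicator {-1..1} x = (1::real)" using bump_neq_0D by blast
  then show ?thesis using bump_bounds[of x]
    by (metis mult.right_neutral mult_left_mono zero_le_power2)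
qed

lemma integrable_sq_bump: "integrable Lm (\<lambda>x. x\<^sup>2 * bump \<delta> x)"
proof (rule integrable_dominated_min_1_sq[of _ 1])
  show "(\<lambda>x. x\<^sup>2 * bump \<delta> x) \<in> borel_measurable borel" using measurable_bump by measurable
  fix x
  have "0 \<le> x\<^sup>2 * bump \<delta> x" using bump_bounds[of x] by simp
  then show "\<bar>x\<^sup>2 * bump \<delta> x\<bar> \<le> 1 * min 1 (x\<^sup>2)" using sq_bump_le[of x] abs_sq_indicator_le[of x]
    by simp
qed

lemma integrable_sq_indicator_inner_cutoff:
  "integrable Lm (\<lambda>x. x\<^sup>2 * (indicator {-1..1} x - inner_cutoff \<tau> x))"
proof (rule integrable_dominated_min_1_sq[of _ 1])
  show "(\<lambda>x. x\<^sup>2 * (indicator {-1..1} x - inner_cutoff \<tau> x)) \<in> borel_measurable borel"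
    using measurable_unit_indicator measurable_inner_cutoff by measurable
  fix x
  have a: "0 \<le> x\<^sup>2 * (indicator {-1..1} x - inner_cutoff \<tau> x)"
    using sq_indicator_inner_cutoff_bounds[of x] by simp
  have "x\<^sup>2 * (indicator {-1..1} x - inner_cutoff \<tau> x) \<le> x\<^sup>2 * indicator {-1..1} x"
    using inner_cutoff_bounds[of x] by (simp add: mult_left_mono)
  then show "\<bar>x\<^sup>2 * (indicator {-1..1} x - inner_cutoff \<tau> x)\<bar> \<le> 1 * min 1 (x\<^sup>2)"
    using a abs_sq_indicator_le[of x] by simp
qed

lemma integrable_integrand_bump: "integrable Lm (\<lambda>x. levy_integrand b x * bump \<delta> x)"
proof (rule Bochner_Integration.integrable_bound[OF integrable_abs[OF integrable_levy_integrand]])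
  show "(\<lambda>x. levy_integrand b x * bump \<delta> x) \<in> borel_measurable Lm"
    using measurable_levy_integrand measurable_bump by (intro measurable_Lm) measurable
  show "AE x in Lm. norm (levy_integrand b x * bump \<delta> x) \<le> norm \<bar>levy_integrand b x\<bar>"
    using bump_bounds by (auto simp: abs_mult intro!: mult_left_le)
qed

lemma integrable_integrand_co_bump: "integrable Lm (\<lambda>x. levy_integrand b x * (1 - bump \<delta> x))"
proof (rule Bochner_Integration.integrable_bound[OF integrable_abs[OF integrable_levy_integrand]])
  show "(\<lambda>x. levy_integrand b x * (1 - bump \<delta> x)) \<in> borel_measurable Lm"
    using measurable_levy_integrand measurable_bump
      by (intro measurable_Lm borel_measurable_times borel_measurable_diff) auto
  show "AE x in Lm. norm (levy_integrand b x * (1 - bump \<delta> x)) \<le> norm \<bar>levy_integrand b x\<bar>"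
    using bump_bounds by (auto simp: abs_mult intro!: mult_left_le)
qed

lemma sets_unit_shell: "unit_shell \<tau> \<in> sets Lm" unfolding unit_shell_def
  by (intro sets_borel_Lm) measurable
lemma sets_abs_ge: "{x. 1/2 \<le> \<bar>x\<bar>} \<in> sets Lm" by (intro sets_borel_Lm) measurable
lemma sets_left_tail: "{..-R} \<in> sets Lm" by (intro sets_borel_Lm) measurable

lemma unit_shell_subset: "unit_shell \<tau> \<subseteq> {x. 1/2 \<le> \<bar>x\<bar>}" unfolding unit_shell_def using \<tau> by auto
lemma left_tail_subset: "{..-R} \<subseteq> {x. 1/2 \<le> \<bar>x\<bar>}" using R by auto

lemma fmeasurable_far: "{x. 1/2 \<le> \<bar>x\<bar>} \<in> fmeasurable Lm"
  using fmeasurable_abs_ge[of "1/2"] sets_abs_ge by (auto simp: fmeasurable_def)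

lemma fmeasurable_unit_shell: "unit_shell \<tau> \<in> fmeasurable Lm"
  using fmeasurableI2[OF fmeasurable_far unit_shell_subset sets_unit_shell] .

lemma fmeasurable_left_tail: "{..-R} \<in> fmeasurable Lm"
  using fmeasurableI2[OF fmeasurable_far left_tail_subset sets_left_tail] .

lemma integrable_indicator_fmeasurable:
  "A \<in> fmeasurable Lm \<Longrightarrow> integrable Lm (indicator A :: real \<Rightarrow> real)"
  by (auto simp: fmeasurable_def integrable_indicator_iff space_Lm)

lemma integral_indicator_fmeasurable: "A \<in> fmeasurable Lm \<Longrightarrow> (\<integral>x. indicator A x \<partial>Lm) = measure Lm A"
  by (auto simp: fmeasurable_def)


lemma C_lo_le_C_up: "C_lo b \<delta> \<le> C_up b \<delta>"
  unfolding C_up_def C_lo_def using b \<delta> by (intro divide_right_mono mult_left_mono) auto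

lemma far_test_le:
  "far_test b \<delta> \<tau> R L y \<le> levy_integrand b y * (1 - bump \<delta> y)
    + exp (- b * R) * indicator {..-R} y + 2 * b * indicator (unit_shell \<tau>) y"
proof -
  let ?g = "levy_integrand b y" and ?G = "clipped_integrand b \<tau> R y"
  have "(1 - bump \<delta> y) * ?g * right_cutoff L y \<le> ?g * (1 - bump \<delta> y)"
  proof (cases "y \<le> L")
    case False
    then have "y \<ge> 2" using L by simp
    then have "bump \<delta> y = 0" "indicator {-1..1} y = (0::real)"
      using \<delta> by (auto intro: bump_eq_0 simp: indicator_def)
    then have "?g \<ge> 0" unfolding levy_integrand_def using \<open>y \<ge> 2\<close> b by simp
    then show ?thesis
      using mult_left_mono[of "right_cutoff L y" 1 ?g] right_cutoff_bounds[of y] \<open>bump \<delta> y = 0\<close>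
      by (simp add: mult.commute)
  qed (simp add: right_cutoff_def)
  moreover have "(1 - bump \<delta> y) * right_cutoff L y * (?G - ?g) \<le> ?G - ?g"
    using mult_right_mono[of "(1 - bump \<delta> y) * right_cutoff L y" 1 "?G - ?g"]
      integrand_le_clipped_integrand[of y] bump_bounds[of y] right_cutoff_bounds[of y]
    by (simp add: mult_le_one)
  moreover have "far_test b \<delta> \<tau> R L y
      = (1 - bump \<delta> y) * ?g * right_cutoff L y + (1 - bump \<delta> y) * right_cutoff L y * (?G - ?g)"
    unfolding far_test_def by (simp add: algebra_simps)
  ultimately show ?thesis using clipped_integrand_minus_integrand[of y] by linarith
qed

lemma integral_near_test_ge:
  "C_up b \<delta> * ((\<integral>x. x\<^sup>2 * indicator {-1..1} x \<partial>Lm) - (\<integral>x. near_test \<delta> \<tau> x \<partial>Lm))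
    \<le> (\<integral>x. levy_integrand b x * bump \<delta> x \<partial>Lm) + (C_up b \<delta> - C_lo b \<delta>) * (\<integral>x. x\<^sup>2 * indicator {-1..1} x \<partial>Lm)
      + C_up b \<delta> * measure Lm (unit_shell \<tau>)"
proof -
  define Q where "Q = (\<integral>x. x\<^sup>2 * indicator {-1..1} x \<partial>Lm)"
  define S where "S = (\<integral>x. x\<^sup>2 * bump \<delta> x \<partial>Lm)"
  define E where "E = (\<integral>x. x\<^sup>2 * (indicator {-1..1} x - inner_cutoff \<tau> x) \<partial>Lm)"
  have "Q - (\<integral>x. near_test \<delta> \<tau> x \<partial>Lm) = (\<integral>x. x\<^sup>2 * indicator {-1..1} x - near_test \<delta> \<tau> x \<partial>Lm)"
    unfolding Q_def using integrable_sq_indicator integrable_near_test by simp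
  also have "\<dots> = (\<integral>x. x\<^sup>2 * bump \<delta> x + x\<^sup>2 * (indicator {-1..1} x - inner_cutoff \<tau> x) \<partial>Lm)"
    using sq_bump_eq by (intro Bochner_Integration.integral_cong) (auto simp: algebra_simps)
  also have "\<dots> = S + E"
    unfolding S_def E_def using integrable_sq_bump integrable_sq_indicator_inner_cutoff by simp
  finally have split: "Q - (\<integral>x. near_test \<delta> \<tau> x \<partial>Lm) = S + E" .
  have "E \<le> (\<integral>x. indicator (unit_shell \<tau>) x \<partial>Lm)"
    unfolding E_def using sq_indicator_inner_cutoff_bounds
    by (intro integral_mono integrable_sq_indicator_inner_cutoff
        integrable_indicator_fmeasurable[OF fmeasurable_unit_shell]) auto
  then have "C_up b \<delta> * E \<le> C_up b \<delta> * measure Lm (unit_shell \<tau>)"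
    using C_up_nonneg integral_indicator_fmeasurable[OF fmeasurable_unit_shell]
      by (simp add: mult_left_mono)
  moreover have "C_lo b \<delta> * S \<le> (\<integral>x. levy_integrand b x * bump \<delta> x \<partial>Lm)"
    unfolding S_def using integrand_bump_ge integrable_sq_bump
    by (subst integral_mult_right_zero[symmetric]) (intro integral_mono integrable_integrand_bump; simp)
  moreover have "S \<le> Q"
    unfolding S_def Q_def
      by (rule integral_mono[OF integrable_sq_bump integrable_sq_indicator sq_bump_le])
  then have "(C_up b \<delta> - C_lo b \<delta>) * S \<le> (C_up b \<delta> - C_lo b \<delta>) * Q"
    using C_lo_le_C_up by (simp add: mult_left_mono)
  ultimately show ?thesis unfolding Q_def[symmetric] split by (simp add: algebra_simps)
qed

lemma integral_far_test_le:
  "(\<integral>x. far_test b \<delta> \<tau> R L x \<partial>Lm) \<le> (\<integral>x. levy_integrand b x * (1 - bump \<delta> x) \<partial>Lm)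
    + exp (- b * R) * measure Lm {x. 1/2 \<le> \<bar>x\<bar>} + 2 * b * measure Lm (unit_shell \<tau>)"
proof -
  have int: "integrable Lm (indicator {..-R} :: real \<Rightarrow> real)" "integrable Lm (indicator (unit_shell \<tau>) :: real \<Rightarrow> real)"
    using integrable_indicator_fmeasurable fmeasurable_left_tail fmeasurable_unit_shell by auto
  have "(\<integral>x. far_test b \<delta> \<tau> R L x \<partial>Lm) \<le> (\<integral>y. levy_integrand b y * (1 - bump \<delta> y)
      + exp (- b * R) * indicator {..-R} y + 2 * b * indicator (unit_shell \<tau>) y \<partial>Lm)"
    using far_test_le int integrable_integrand_co_bump
      by (intro integral_mono integrable_far_test) auto
  also have "\<dots> = (\<integral>x. levy_integrand b x * (1 - bump \<delta> x) \<partial>Lm)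
      + exp (- b * R) * measure Lm {..-R} + 2 * b * measure Lm (unit_shell \<tau>)"
    using int integrable_integrand_co_bump integral_indicator_fmeasurable fmeasurable_left_tail
      fmeasurable_unit_shell by simp
  also have "\<dots> \<le> (\<integral>x. levy_integrand b x * (1 - bump \<delta> x) \<partial>Lm)
      + exp (- b * R) * measure Lm {x. 1/2 \<le> \<bar>x\<bar>} + 2 * b * measure Lm (unit_shell \<tau>)"
    using measure_mono_fmeasurable[OF left_tail_subset sets_left_tail fmeasurable_far] by simp
  finally show ?thesis .
qed

lemma test_integrals_le:
  "C_up b \<delta> * ((\<integral>x. x\<^sup>2 * indicator {-1..1} x \<partial>Lm) - (\<integral>x. near_test \<delta> \<tau> x \<partial>Lm))
      + (\<integral>x. far_test b \<delta> \<tau> R L x \<partial>Lm)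
    \<le> (\<integral>x. levy_integrand b x \<partial>Lm) + (C_up b \<delta> - C_lo b \<delta>) * (\<integral>x. x\<^sup>2 * indicator {-1..1} x \<partial>Lm)
      + (C_up b \<delta> + 2 * b) * measure Lm (unit_shell \<tau>) + exp (- b * R) * measure Lm {x. 1/2 \<le> \<bar>x\<bar>}"
proof -
  have "(\<integral>x. levy_integrand b x \<partial>Lm)
      = (\<integral>x. levy_integrand b x * bump \<delta> x + levy_integrand b x * (1 - bump \<delta> x) \<partial>Lm)"
    by (simp add: algebra_simps)
  also have "\<dots> = (\<integral>x. levy_integrand b x * bump \<delta> x \<partial>Lm) + (\<integral>x. levy_integrand b x * (1 - bump \<delta> x) \<partial>Lm)"
    using integrable_integrand_bump integrable_integrand_co_bump by simp
  finally show ?thesis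
    using integral_near_test_ge integral_far_test_le by (simp add: algebra_simps)
qed

end

section \<open>Superharmonicity of \<open>l \<mapsto> l ^ \<beta>\<^sub>0\<close> for large \<open>l\<close>\<close>

definition Pistar_summable :: "(nat \<Rightarrow> nat \<Rightarrow> real) \<Rightarrow> nat \<Rightarrow> (real \<Rightarrow> real) \<Rightarrow> bool" where
  "Pistar_summable p n g \<longleftrightarrow> summable (\<lambda>k. p n (Suc k) * g (ln (real (Suc k)) - ln (real n)))"

lemma Pistar_summable_add:
  "Pistar_summable p n f \<Longrightarrow> Pistar_summable p n g \<Longrightarrow> Pistar_summable p n (\<lambda>x. f x + g x)"
  unfolding Pistar_summable_def by (simp add: distrib_left summable_add)

lemma Pistar_summable_diff:
  "Pistar_summable p n f \<Longrightarrow> Pistar_summable p n g \<Longrightarrow> Pistar_summable p n (\<lambda>x. f x - g x)"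
  unfolding Pistar_summable_def by (simp add: right_diff_distrib summable_diff)

lemma Pistar_summable_mult: "Pistar_summable p n f \<Longrightarrow> Pistar_summable p n (\<lambda>x. c * f x)"
  unfolding Pistar_summable_def by (simp add: mult.left_commute summable_mult)

lemma Pistar_int_add:
  "Pistar_summable p n f \<Longrightarrow> Pistar_summable p n g \<Longrightarrow>
    Pistar_int p n (\<lambda>x. f x + g x) = Pistar_int p n f + Pistar_int p n g"
  unfolding Pistar_summable_def Pistar_int_def by (simp add: distrib_left suminf_add)

lemma Pistar_int_diff:
  "Pistar_summable p n f \<Longrightarrow> Pistar_summable p n g \<Longrightarrow>
    Pistar_int p n (\<lambda>x. f x - g x) = Pistar_int p n f - Pistar_int p n g"
  unfolding Pistar_summable_def Pistar_int_def by (simp add: right_diff_distrib suminf_diff)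

lemma Pistar_int_mult: "Pistar_summable p n f \<Longrightarrow> Pistar_int p n (\<lambda>x. c * f x) = c * Pistar_int p n f"
  unfolding Pistar_summable_def Pistar_int_def by (simp add: mult.left_commute suminf_mult)

lemma Pistar_nn_less_imp:
  assumes "\<And>k. p n k \<ge> 0" "a > 0" "\<And>x. G x \<ge> 0"
    and less: "ennreal a * Pistar_nn p n G < ennreal c"
  shows "Pistar_summable p n G \<and> a * Pistar_int p n G < c"
proof -
  let ?t = "\<lambda>k. p n (Suc k) * G (ln (real (Suc k)) - ln (real n))"
  have t_nonneg: "?t k \<ge> 0" for k using assms(1,3) by simp
  have "(\<Sum>k. ennreal (?t k)) \<noteq> \<top>"
    using less \<open>a > 0\<close> unfolding Pistar_nn_def by (auto simp: ennreal_mult_top)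
  then have summable: "summable ?t" by (rule summable_suminf_not_top[OF t_nonneg])
  then have "ennreal (a * (\<Sum>k. ?t k)) = ennreal a * Pistar_nn p n G"
    unfolding Pistar_nn_def using \<open>a > 0\<close> t_nonneg
    by (simp add: suminf_ennreal2 ennreal_mult suminf_nonneg)
  then have "ennreal (a * (\<Sum>k. ?t k)) < ennreal c" using less by simp
  moreover have "0 \<le> a * (\<Sum>k. ?t k)" using \<open>a > 0\<close> suminf_nonneg[OF summable t_nonneg] by simp
  ultimately have "a * (\<Sum>k. ?t k) < c" by (simp add: ennreal_less_iff)
  then show ?thesis using summable unfolding Pistar_summable_def Pistar_int_def by simp
qed

lemma eventually_Pistar_int_bounded:
  assumes "\<And>n k. p n k \<ge> 0" "\<And>n. a n > 0" "\<And>x. G x \<ge> 0"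
    and A3: "limsup (\<lambda>n. ennreal (a n) * Pistar_nn p n G) < \<infinity>"
  obtains C where "C \<ge> 0" "\<forall>\<^sub>F n in sequentially. Pistar_summable p n G \<and> a n * Pistar_int p n G \<le> C"
proof -
  obtain r where "r \<ge> 0" "limsup (\<lambda>n. ennreal (a n) * Pistar_nn p n G) = ennreal r"
    using A3 less_top_ennreal by (metis infinity_ennreal_def)
  then have "\<forall>\<^sub>F n in sequentially. ennreal (a n) * Pistar_nn p n G < ennreal (r + 1)"
    by (intro Limsup_lessD) simp
  then have "\<forall>\<^sub>F n in sequentially. Pistar_summable p n G \<and> a n * Pistar_int p n G \<le> r + 1"
  proof eventually_elim
    case (elim n)
    show ?case using Pistar_nn_less_imp[OF assms(1) assms(2)[of n] assms(3) elim] by simp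
  qed
  moreover have "r + 1 \<ge> 0" using \<open>r \<ge> 0\<close> by simp
  ultimately show thesis using that by blast
qed

context stochastic_kernel
begin

lemma Pistar_summable_bounded:
  assumes "n \<ge> 1" "\<And>y. \<bar>g y\<bar> \<le> B"
  shows "Pistar_summable p n g"
  unfolding Pistar_summable_def
proof (rule summable_comparison_test'[where N = 0])
  show "summable (\<lambda>k. B * p n (Suc k))"
    using row_sums[OF assms(1)] by (intro summable_mult) (simp add: sums_iff)
  show "norm (p n (Suc k) * g (ln (real (Suc k)) - ln (real n))) \<le> B * p n (Suc k)" for k
    using mult_left_mono[OF assms(2)[of "ln (real (Suc k)) - ln (real n)"] nonneg[of n "Suc k"]]
    by (simp add: abs_mult abs_of_nonneg[OF nonneg] mult.commute)
qed

text \<open>Summing \<open>e ^ (\<beta> y) - 1 \<le> h y\<close> over \<open>y = ln (k / j)\<close> with weights \<open>p j k\<close> gives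
  \<open>j ^ -\<beta> \<Sum>\<^sub>k p j k k ^ \<beta> - 1 \<le> \<integral> h d\<Pi>\<^sup>*\<^sub>j\<close>.\<close>

lemma superharmonic_power_if_Pistar_int_nonpos:
  assumes "j \<ge> 1" and h: "\<And>y. exp (\<beta> * y) - 1 \<le> h y"
    and "Pistar_summable p j h" "Pistar_int p j h \<le> 0"
  shows "superharmonic_power p \<beta> j"
proof -
  define u where "u k = p j (Suc k)" for k
  define y where "y k = ln (real (Suc k)) - ln (real j)" for k
  define T where "T k = u k * exp (\<beta> * y k)" for k
  have summable_u: "summable u" and sum_u: "(\<Sum>k. u k) = 1"
    using row_sums[OF assms(1)] unfolding u_def by (auto simp: sums_iff)
  have summable_h: "summable (\<lambda>k. u k * h (y k))" and sum_h: "(\<Sum>k. u k * h (y k)) \<le> 0"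
    using assms(3,4) unfolding Pistar_summable_def Pistar_int_def u_def y_def by auto
  have T_le: "T k \<le> u k + u k * h (y k)" for k
  proof -
    have "u k * (exp (\<beta> * y k) - 1) \<le> u k * h (y k)"
      using h nonneg unfolding u_def by (intro mult_left_mono) auto
    then show ?thesis unfolding T_def by (simp add: algebra_simps)
  qed
  have summable_T: "summable T"
    by (rule summable_comparison_test'[OF summable_add[OF summable_u summable_h], of 0])
      (use T_le nonneg in \<open>simp add: T_def u_def\<close>)
  have "(\<Sum>k. T k) \<le> (\<Sum>k. u k + u k * h (y k))"
    by (rule suminf_le[OF T_le summable_T summable_add[OF summable_u summable_h]])
  also have "\<dots> \<le> 1" using suminf_add[OF summable_u summable_h] sum_u sum_h by simp
  finally have sum_T: "(\<Sum>k. T k) \<le> 1" .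
  have P: "p j (Suc k) * real (Suc k) powr \<beta> = real j powr \<beta> * T k" for k
    using \<open>j \<ge> 1\<close> unfolding T_def u_def y_def
    by (simp add: powr_def right_diff_distrib exp_diff)
  show ?thesis
    unfolding superharmonic_power_def P
    using summable_mult[OF summable_T, of "real j powr \<beta>"] suminf_mult[OF summable_T] sum_T
    by (simp add: mult_left_le)
qed

end

lemma exists_bump_width:
  fixes b \<sigma>2 Q \<kappa> :: real
  assumes "\<kappa> > 0"
  shows "\<exists>\<delta>. 0 < \<delta> \<and> \<delta> \<le> 1/8 \<and> (C_up b \<delta> - b\<^sup>2 / 2) * \<sigma>2 + (C_up b \<delta> - C_lo b \<delta>) * Q < \<kappa>"
proof -
  let ?f = "\<lambda>\<delta>. (C_up b \<delta> - b\<^sup>2 / 2) * \<sigma>2 + (C_up b \<delta> - C_lo b \<delta>) * Q"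
  have "(?f \<longlongrightarrow> ?f 0) (at_right 0)"
    unfolding C_up_def C_lo_def by (intro tendsto_intros) auto
  moreover have "?f 0 = 0" by (simp add: C_up_def C_lo_def)
  ultimately have "\<forall>\<^sub>F \<delta> in at_right 0. ?f \<delta> < \<kappa>" using assms by (simp add: order_tendstoD(2))
  moreover have "\<forall>\<^sub>F \<delta> in at_right 0. \<delta> \<in> {0<..<1/8::real}" by (rule eventually_at_right_real) simp
  ultimately have "\<forall>\<^sub>F \<delta> in at_right 0. 0 < \<delta> \<and> \<delta> \<le> 1/8 \<and> ?f \<delta> < \<kappa>"
    by eventually_elim auto
  then show ?thesis using eventually_happens'[OF trivial_limit_at_right_real] by blast
qed

lemma exp_neg_mult_less:
  fixes c \<kappa> s X :: real
  assumes "c \<ge> 0" "\<kappa> > 0" "s > 0" "X \<ge> (c + 1) / (\<kappa> * s)"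
  shows "exp (- (s * X)) * c < \<kappa>"
proof -
  have "s * X \<ge> (c + 1) / \<kappa>" using assms by (simp add: field_simps)
  then have "exp (s * X) \<ge> 1 + (c + 1) / \<kappa>" using exp_ge_add_one_self[of "s * X"] by linarith
  then have "\<kappa> * exp (s * X) \<ge> \<kappa> + c + 1" using \<open>\<kappa> > 0\<close> by (simp add: field_simps)
  then show ?thesis using \<open>\<kappa> > 0\<close> by (simp add: exp_minus field_simps)
qed

context levy_measure
begin

text \<open>Choice of the cutoff parameters: the right-hand side of the key inequality, integrated
  against the limit \<open>\<Pi>\<close>, exceeds \<open>\<Psi>(b) < 0\<close> by four errors, each made smaller than
  \<open>-\<Psi>(b) / 4\<close>.\<close>

lemma exists_cutoffs:
  assumes "0 < b" "b < \<beta>" "\<sigma>2 \<ge> 0" "C \<ge> 0"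
    and integrable: "integrable Lm (levy_integrand b)" and Psi_neg: "Psi \<sigma>2 d Lm b < 0"
  shows "\<exists>\<delta> \<tau> R L. cutoffs b \<delta> \<tau> R L \<and>
    b * d + C_up b \<delta> * (\<sigma>2 + (\<integral>x. x\<^sup>2 * indicator {-1..1} x \<partial>Lm) - (\<integral>x. near_test \<delta> \<tau> x \<partial>Lm))
      + (\<integral>x. far_test b \<delta> \<tau> R L x \<partial>Lm) + exp (-(\<beta> - b) * L) * C < 0"
proof -
  define \<kappa> where "\<kappa> = - Psi \<sigma>2 d Lm b / 4"
  define Q where "Q = (\<integral>x. x\<^sup>2 * indicator {-1..1} x \<partial>Lm)"
  define \<Lambda> where "\<Lambda> = measure Lm {x. 1/2 \<le> \<bar>x\<bar>}"
  have "\<kappa> > 0" using Psi_neg unfolding \<kappa>_def by simp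
  obtain \<delta> where \<delta>: "0 < \<delta>" "\<delta> \<le> 1/8"
    and E1: "(C_up b \<delta> - b\<^sup>2 / 2) * \<sigma>2 + (C_up b \<delta> - C_lo b \<delta>) * Q < \<kappa>"
    using exists_bump_width[OF \<open>\<kappa> > 0\<close>] by blast
  define c where "c = C_up b \<delta> + 2 * b"
  have "c \<ge> 0" unfolding c_def C_up_def using \<open>b > 0\<close> by simp
  obtain \<tau> where \<tau>: "0 < \<tau>" "\<tau> \<le> 1/4" and shell: "measure Lm (unit_shell \<tau>) < \<kappa> / (c + 1)"
    using measure_unit_shell_small[of "\<kappa> / (c + 1)"] \<open>\<kappa> > 0\<close> \<open>c \<ge> 0\<close> by auto
  have "c * measure Lm (unit_shell \<tau>) \<le> (c + 1) * measure Lm (unit_shell \<tau>)"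
    by (simp add: algebra_simps)
  also have "\<dots> < \<kappa>" using shell \<open>c \<ge> 0\<close> by (simp add: field_simps)
  finally have E2: "c * measure Lm (unit_shell \<tau>) < \<kappa>" .
  define R where "R = max 2 ((\<Lambda> + 1) / (\<kappa> * b))"
  define L where "L = max 2 ((C + 1) / (\<kappa> * (\<beta> - b)))"
  have E3: "exp (- b * R) * \<Lambda> < \<kappa>"
    using exp_neg_mult_less[of \<Lambda> \<kappa> b R] \<open>\<kappa> > 0\<close> \<open>b > 0\<close> unfolding R_def \<Lambda>_def by simp
  have "exp (- ((\<beta> - b) * L)) * C < \<kappa>"
    using exp_neg_mult_less[of C \<kappa> "\<beta> - b" L] \<open>\<kappa> > 0\<close> \<open>b < \<beta>\<close> \<open>C \<ge> 0\<close> unfolding L_def by simp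
  then have E4: "exp (-(\<beta> - b) * L) * C < \<kappa>" by (simp only: minus_mult_left)
  interpret cutoffs_levy b \<delta> \<tau> R L Lm
    by unfold_locales (use \<open>b > 0\<close> \<delta> \<tau> integrable in \<open>auto simp: R_def L_def\<close>)
  have "Psi \<sigma>2 d Lm b = \<sigma>2 * b\<^sup>2 / 2 + d * b + (\<integral>x. levy_integrand b x \<partial>Lm)"
    unfolding Psi_def levy_integrand_def by simp
  then have "b * d + C_up b \<delta> * (\<sigma>2 + Q - (\<integral>x. near_test \<delta> \<tau> x \<partial>Lm))
      + (\<integral>x. far_test b \<delta> \<tau> R L x \<partial>Lm) + exp (-(\<beta> - b) * L) * C < 0"
    using test_integrals_le E1 E2 E3 E4 unfolding \<kappa>_def Q_def \<Lambda>_def c_def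
    by (simp add: algebra_simps)
  then show ?thesis unfolding Q_def using cutoffs_axioms by blast
qed

end

context stochastic_kernel
begin

lemma superharmonic_power_if_test_sum_neg:
  fixes b \<beta> a :: real
  assumes "cutoffs b \<delta> \<tau> R L" "b < \<beta>" "n \<ge> 1" "a > 0"
    and tail: "Pistar_summable p n (\<lambda>x. exp (\<beta> * x) * indicator {1<..} x)"
    and neg: "a * (b * Pistar_int p n (\<lambda>x. x * indicator {-1..1} x)
      + C_up b \<delta> * (Pistar_int p n (\<lambda>x. x\<^sup>2 * indicator {-1..1} x) - Pistar_int p n (near_test \<delta> \<tau>))
      + Pistar_int p n (far_test b \<delta> \<tau> R L)
      + exp (-(\<beta> - b) * L) * Pistar_int p n (\<lambda>x. exp (\<beta> * x) * indicator {1<..} x)) < 0"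
  shows "superharmonic_power p b n"
proof -
  interpret cutoffs b \<delta> \<tau> R L by fact
  define h where "h y = b * (y * indicator {-1..1} y)
      + C_up b \<delta> * (y\<^sup>2 * indicator {-1..1} y - near_test \<delta> \<tau> y) + far_test b \<delta> \<tau> R L y
      + exp (-(\<beta> - b) * L) * (exp (\<beta> * y) * indicator {1<..} y)" for y
  have bounded: "Pistar_summable p n g" if "\<And>y. \<bar>g y\<bar> \<le> B" for g B
    using Pistar_summable_bounded[OF \<open>n \<ge> 1\<close> that] .
  have "Pistar_summable p n (\<lambda>x. x * indicator {-1..1} x)"
    by (rule bounded[of _ 1]) (auto simp: indicator_def abs_le_iff)
  moreover have "Pistar_summable p n (\<lambda>x. x\<^sup>2 * indicator {-1..1} x)"
  proof (rule bounded[of _ 1])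
    show "\<bar>y\<^sup>2 * indicator {-1..1} y\<bar> \<le> 1" for y :: real
      by (cases "y \<in> {-1..1}") (auto simp: abs_square_le_1 abs_le_iff)
  qed
  moreover have "Pistar_summable p n (near_test \<delta> \<tau>)" by (rule bounded[OF abs_near_test_le])
  moreover have "Pistar_summable p n (far_test b \<delta> \<tau> R L)" by (rule bounded[OF abs_far_test_le])
  ultimately have "Pistar_summable p n h"
    and "Pistar_int p n h = b * Pistar_int p n (\<lambda>x. x * indicator {-1..1} x)
      + C_up b \<delta> * (Pistar_int p n (\<lambda>x. x\<^sup>2 * indicator {-1..1} x) - Pistar_int p n (near_test \<delta> \<tau>))
      + Pistar_int p n (far_test b \<delta> \<tau> R L)
      + exp (-(\<beta> - b) * L) * Pistar_int p n (\<lambda>x. exp (\<beta> * x) * indicator {1<..} x)"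
    using tail unfolding h_def[abs_def]
    by (simp_all only: Pistar_int_add Pistar_int_diff Pistar_int_mult Pistar_summable_add
        Pistar_summable_diff Pistar_summable_mult)
  then have "Pistar_int p n h \<le> 0" using neg \<open>a > 0\<close> by (simp add: mult_less_0_iff)
  then show ?thesis
    using superharmonic_power_if_Pistar_int_nonpos[OF \<open>n \<ge> 1\<close> exp_minus_one_le_tests[OF \<open>b < \<beta>\<close>]]
      \<open>Pistar_summable p n h\<close> unfolding h_def by blast
qed

text \<open>After rescaling by \<open>a n\<close>, the integrals of the test functions against \<open>\<Pi>\<^sup>*\<^sub>n\<close> converge by
  (A1) and (A2) to a strictly negative limit, while (A3) keeps the tail term below its share.\<close>

lemma eventually_superharmonic_power:
  fixes a :: "nat \<Rightarrow> real" and Lm :: "real measure"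
  assumes "levy_measure Lm" and a_pos: "\<And>n. a n > 0"
    and A1: "\<And>f :: ereal \<Rightarrow> real. continuous_on {0..\<infinity>} f \<Longrightarrow>
          (\<exists>\<delta>>0. \<forall>y\<in>{0..\<infinity>}. \<bar>y - 1\<bar> < ereal \<delta> \<longrightarrow> f y = 0) \<Longrightarrow>
          ((\<lambda>n. a n * (\<Sum>k. p n (Suc k) * f (ereal (real (Suc k) / real n))))
             \<longlongrightarrow> (\<integral>x. f (ereal (exp x)) \<partial>Lm)) sequentially"
    and "\<sigma>2 \<ge> 0"
    and A2_b: "((\<lambda>n. a n * Pistar_int p n (\<lambda>x. x * indicator {-1..1} x)) \<longlongrightarrow> d) sequentially"
    and A2_\<sigma>: "((\<lambda>n. a n * Pistar_int p n (\<lambda>x. x\<^sup>2 * indicator {-1..1} x))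
          \<longlongrightarrow> \<sigma>2 + (\<integral>x. x\<^sup>2 * indicator {-1..1} x \<partial>Lm)) sequentially"
    and A3: "limsup (\<lambda>n. ennreal (a n) * Pistar_nn p n (\<lambda>x. exp (\<beta> * x) * indicator {1<..} x)) < \<infinity>"
    and "0 < \<beta>0" "\<beta>0 < \<beta>"
    and integrable: "integrable Lm (levy_integrand \<beta>0)" and "Psi \<sigma>2 d Lm \<beta>0 < 0"
  shows "\<forall>\<^sub>F j in sequentially. superharmonic_power p \<beta>0 j"
proof -
  interpret levy_measure Lm by fact
  let ?T = "\<lambda>x. exp (\<beta> * x) * indicator {1<..} x"
  obtain C where "C \<ge> 0" and tail: "\<forall>\<^sub>F n in sequentially. Pistar_summable p n ?T \<and> a n * Pistar_int p n ?T \<le> C"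
    using eventually_Pistar_int_bounded[OF nonneg a_pos _ A3] by auto
  obtain \<delta> \<tau> R L where "cutoffs \<beta>0 \<delta> \<tau> R L"
    and limit_neg: "\<beta>0 * d + C_up \<beta>0 \<delta> * (\<sigma>2 + (\<integral>x. x\<^sup>2 * indicator {-1..1} x \<partial>Lm) - (\<integral>x. near_test \<delta> \<tau> x \<partial>Lm))
      + (\<integral>x. far_test \<beta>0 \<delta> \<tau> R L x \<partial>Lm) + exp (-(\<beta> - \<beta>0) * L) * C < 0"
    using exists_cutoffs[OF \<open>0 < \<beta>0\<close> \<open>\<beta>0 < \<beta>\<close> \<open>\<sigma>2 \<ge> 0\<close> \<open>C \<ge> 0\<close> integrable \<open>Psi \<sigma>2 d Lm \<beta>0 < 0\<close>]
    by blast
  interpret cutoffs \<beta>0 \<delta> \<tau> R L by fact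
  let ?c = "exp (-(\<beta> - \<beta>0) * L)"
  define Z where "Z n = \<beta>0 * (a n * Pistar_int p n (\<lambda>x. x * indicator {-1..1} x))
      + C_up \<beta>0 \<delta> * (a n * Pistar_int p n (\<lambda>x. x\<^sup>2 * indicator {-1..1} x) - a n * Pistar_int p n (near_test \<delta> \<tau>))
      + a n * Pistar_int p n (far_test \<beta>0 \<delta> \<tau> R L)" for n
  have "(\<lambda>n. a n * Pistar_int p n (near_test \<delta> \<tau>)) \<longlonglongrightarrow> (\<integral>x. near_test \<delta> \<tau> x \<partial>Lm)"
    by (rule tendsto_Pistar_int_A1[OF A1 continuous_near_test zero_less_one \<delta>(1) near_test_eq_0_small])
      (simp_all add: near_test_eq_0_large)
  moreover have "(\<lambda>n. a n * Pistar_int p n (far_test \<beta>0 \<delta> \<tau> R L)) \<longlonglongrightarrow> (\<integral>x. far_test \<beta>0 \<delta> \<tau> R L x \<partial>Lm)"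
    by (rule tendsto_Pistar_int_A1[OF A1 continuous_far_test _ \<delta>(1) far_test_eq_0_small, of "max R (L + 1)"])
      (use R in \<open>simp_all add: far_test_left far_test_eq_0_right\<close>)
  ultimately have "Z \<longlonglongrightarrow> \<beta>0 * d + C_up \<beta>0 \<delta> * (\<sigma>2 + (\<integral>x. x\<^sup>2 * indicator {-1..1} x \<partial>Lm)
      - (\<integral>x. near_test \<delta> \<tau> x \<partial>Lm)) + (\<integral>x. far_test \<beta>0 \<delta> \<tau> R L x \<partial>Lm)"
    unfolding Z_def[abs_def] by (intro tendsto_intros A2_b A2_\<sigma>)
  then have "\<forall>\<^sub>F n in sequentially. Z n + ?c * C < 0"
    using limit_neg by (intro order_tendstoD(2)) (auto intro: tendsto_intros)
  moreover have "\<forall>\<^sub>F n in sequentially. n \<ge> 1" by (rule eventually_ge_at_top)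
  ultimately show ?thesis using tail
  proof eventually_elim
    case (elim n)
    then have "?c * (a n * Pistar_int p n ?T) \<le> ?c * C" by (intro mult_left_mono) auto
    moreover have "a n * (\<beta>0 * Pistar_int p n (\<lambda>x. x * indicator {-1..1} x)
      + C_up \<beta>0 \<delta> * (Pistar_int p n (\<lambda>x. x\<^sup>2 * indicator {-1..1} x) - Pistar_int p n (near_test \<delta> \<tau>))
      + Pistar_int p n (far_test \<beta>0 \<delta> \<tau> R L) + ?c * Pistar_int p n ?T)
      = Z n + ?c * (a n * Pistar_int p n ?T)"
      unfolding Z_def by (simp add: algebra_simps)
    ultimately have "a n * (\<beta>0 * Pistar_int p n (\<lambda>x. x * indicator {-1..1} x)
      + C_up \<beta>0 \<delta> * (Pistar_int p n (\<lambda>x. x\<^sup>2 * indicator {-1..1} x) - Pistar_int p n (near_test \<delta> \<tau>))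
      + Pistar_int p n (far_test \<beta>0 \<delta> \<tau> R L) + ?c * Pistar_int p n ?T) < 0"
      using elim by linarith
    then show ?case
      using superharmonic_power_if_test_sum_neg[OF \<open>cutoffs \<beta>0 \<delta> \<tau> R L\<close> \<open>\<beta>0 < \<beta>\<close> _ a_pos] elim
        by blast
  qed
qed

end

theorem mainTheorem10:
  fixes p :: "nat \<Rightarrow> nat \<Rightarrow> real"
    and M :: "'a measure" and X :: "nat \<Rightarrow> nat \<Rightarrow> 'a \<Rightarrow> nat"
    and a :: "nat \<Rightarrow> real" and \<gamma> :: real
    and Lm :: "real measure" and b \<sigma>2 \<beta> \<beta>0 \<epsilon> :: real
    and N :: "'b measure" and \<xi> :: "real \<Rightarrow> 'b \<Rightarrow> real"
    and K :: nat
  assumes p_nonneg: "\<And>n k. p n k \<ge> 0"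
    and p_sum: "\<And>n. n \<ge> 1 \<Longrightarrow> (\<lambda>k. p n (Suc k)) sums 1"
    and M_prob: "prob_space M"
    and X_meas: "\<And>i m. X i m \<in> measurable M (count_space UNIV)"
    and X_pos: "\<And>i m \<omega>. \<omega> \<in> space M \<Longrightarrow> X i m \<omega> \<ge> 1"
    and X_markov: "\<And>i k (x :: nat \<Rightarrow> nat). i \<ge> 1 \<Longrightarrow> (\<forall>m\<le>k. x m \<ge> 1) \<Longrightarrow>
          measure M {\<omega> \<in> space M. \<forall>m\<le>k. X i m \<omega> = x m}
            = (if x 0 = i then 1 else 0) * (\<Prod>m<k. p (x m) (x (Suc m)))"
    and a_rv: "regularly_varying_seq \<gamma> a" and \<gamma>_pos: "\<gamma> > 0"
    and Pi_sets: "sets Lm = sets borel"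
    and Pi_0: "emeasure Lm {0} = 0"
    and Pi_pm1: "emeasure Lm {-1, 1} = 0"
    and Pi_levy: "(\<integral>\<^sup>+ x. ennreal (min 1 (x\<^sup>2)) \<partial>Lm) < \<infinity>"
    and A1: "\<And>f :: ereal \<Rightarrow> real. continuous_on {0..\<infinity>} f \<Longrightarrow>
          (\<exists>\<delta>>0. \<forall>y\<in>{0..\<infinity>}. \<bar>y - 1\<bar> < ereal \<delta> \<longrightarrow> f y = 0) \<Longrightarrow>
          ((\<lambda>n. a n * (\<Sum>k. p n (Suc k) * f (ereal (real (Suc k) / real n))))
             \<longlongrightarrow> (\<integral>x. f (ereal (exp x)) \<partial>Lm)) sequentially"
    and \<sigma>2_nonneg: "\<sigma>2 \<ge> 0"
    and A2_b: "((\<lambda>n. a n * Pistar_int p n (\<lambda>x. x * indicator {-1..1} x)) \<longlongrightarrow> b) sequentially"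
    and A2_\<sigma>: "((\<lambda>n. a n * Pistar_int p n (\<lambda>x. x\<^sup>2 * indicator {-1..1} x))
          \<longlongrightarrow> \<sigma>2 + (\<integral>x. x\<^sup>2 * indicator {-1..1} x \<partial>Lm)) sequentially"
    and \<beta>_pos: "\<beta> > 0"
    and A3: "limsup (\<lambda>n. ennreal (a n) * Pistar_nn p n (\<lambda>x. exp (\<beta> * x) * indicator {1<..} x)) < \<infinity>"
    and xi_levy: "levy_process N \<xi> (levy_exponent \<sigma>2 b Lm)"
    and xi_drift: "drifts_to_neg_infty N \<xi>"
    and \<beta>0: "0 < \<beta>0" "\<beta>0 < \<beta>"
    and Psi_finite: "integrable Lm (\<lambda>x. exp (\<beta>0 * x) - 1 - \<beta>0 * x * indicator {-1..1} x)"
    and Psi_neg: "Psi \<sigma>2 b Lm \<beta>0 < 0"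
    and K_ge: "K \<ge> 1"
    and K_reach: "\<And>n. n \<ge> 1 \<Longrightarrow> measure M {\<omega> \<in> space M. \<exists>m. X n m \<omega> \<le> K} > 0"
    and \<epsilon>_pos: "\<epsilon> > 0"
  shows "\<exists>n0. \<forall>n\<ge>n0. \<forall>i::nat. 1 \<le> i \<and> real i \<le> \<epsilon>\<^sup>2 * real n \<longrightarrow>
           measure M {\<omega> \<in> space M.
              hit_time (\<lambda>k. X i k \<omega>) {m. real m \<ge> \<epsilon> * real n}
                < hit_time (\<lambda>k. X i k \<omega>) {1..K}} \<le> 2 * \<epsilon> powr \<beta>0"
proof -
  have "stochastic_kernel p" by unfold_locales (fact p_nonneg p_sum)+
  then interpret nat_markov_chain p M X
    using M_prob X_meas X_pos X_markov
      by (simp add: nat_markov_chain_def nat_markov_chain_axioms_def)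
  have levy: "levy_measure Lm" by unfold_locales (fact Pi_sets Pi_pm1 Pi_levy)+
  have a_pos: "\<And>n. a n > 0" using a_rv unfolding regularly_varying_seq_def by blast
  have integrable: "integrable Lm (levy_integrand \<beta>0)"
    using Psi_finite unfolding levy_integrand_def[abs_def] by (simp add: mult.assoc)
  have "\<forall>\<^sub>F j in sequentially. superharmonic_power p \<beta>0 j"
    by (rule eventually_superharmonic_power[OF levy a_pos A1 \<sigma>2_nonneg A2_b A2_\<sigma> A3 \<beta>0 integrable Psi_neg])
  then show ?thesis by (rule prob_climb_before_K_le[OF \<beta>0(1) \<epsilon>_pos _ K_reach])
qed

end
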